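(* For lossless transmission of arbitrarily correlated sources $(S_1,S_2)$ over a discrete memoryless two-way channel $p(y_1,y_2|x_1,x_2)$, source-channel rate $b=1$ is achievable (even with restricted encoders that do not use past channel outputs) if there is a joint distribution $$p(q,s_1,s_2,x_1,x_2,y_1,y_2)=p(q)p(s_1,s_2)p(x_1|q,s_1)p(x_2|q,s_2)p(y_1,y_2|x_1,x_2)$$ such that $H(S_1|S_2)<I(X_1;Y_2|X_2,S_2,Q)$ and $H(S_2|S_1)<I(X_2;Y_1|X_1,S_1,Q)$.
   Context: Two-way channel model: $(S_{1,k},S_{2,k})$ i.i.d. $\sim p(s_1,s_2)$ on finite alphabets; finite channel alphabets. User $i\in\{1,2\}$ observes $S_i^m$ and at time $j\le n$ sends $X_{i,j}=f_{i,j}(S_i^m,Y_i^{j-1})$, where $Y_i$ is user $i$'s channel output. User 2 decodes $\hat S_1^m$ from $(Y_2^n,S_2^m)$ and user 1 decodes $\hat S_2^m$ from $(Y_1^n,S_1^m)$. Error probability $P_e^{(m,n)}=\Pr\{\bigcup_{k=1,2}\{S_k^m\neq\hat S_k^m\}\}$. Rate $b$ is achievable if for every $\epsilon>0$ there exist positive integers $m,n$ with $n/m=b$ and encoders/decoders with $P_e^{(m,n)}<\epsilon$. Restricted encoders: $X_{i,j}$ depends only on $S_i^m$. *)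

theory Defs
  imports Complex_Main
begin

definition is_pmf :: "('a::finite \<Rightarrow> real) \<Rightarrow> bool" where
  "is_pmf p \<longleftrightarrow> (\<forall>a. 0 \<le> p a) \<and> (\<Sum>a\<in>UNIV. p a) = 1"

definition prv :: "('w::finite \<Rightarrow> real) \<Rightarrow> ('w \<Rightarrow> 'v) \<Rightarrow> 'v \<Rightarrow> real" where
  "prv J f v = (\<Sum>w\<in>{w. f w = v}. J w)"

definition cond_entropy ::
  "('w::finite \<Rightarrow> real) \<Rightarrow> ('w \<Rightarrow> 'a) \<Rightarrow> ('w \<Rightarrow> 'b) \<Rightarrow> real" where
  "cond_entropy J A B =
     - (\<Sum>w\<in>UNIV. J w * log 2 (prv J (\<lambda>u. (A u, B u)) (A w, B w) / prv J B (B w)))"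

definition cond_mutual_info ::
  "('w::finite \<Rightarrow> real) \<Rightarrow> ('w \<Rightarrow> 'a) \<Rightarrow> ('w \<Rightarrow> 'b) \<Rightarrow> ('w \<Rightarrow> 'c) \<Rightarrow> real" where
  "cond_mutual_info J A B C =
     (\<Sum>w\<in>UNIV. J w * log 2
        ((prv J (\<lambda>u. (A u, B u, C u)) (A w, B w, C w) * prv J C (C w)) /
         (prv J (\<lambda>u. (A u, C u)) (A w, C w) * prv J (\<lambda>u. (B u, C u)) (B w, C w))))"

text \<open>Sequences are lists; index j ranges over 0..<n, so the past outputs Y_i^{j-1}
  are take j y.
  Encoders: f1 j s1 y1past, f2 j s2 y2past. Decoders: g2 y2 s2 (estimate of S1^m),
  g1 y1 s1 (estimate of S2^m).\<close>

definition error_prob ::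
  "('s1::finite \<times> 's2::finite \<Rightarrow> real) \<Rightarrow>
   ('x1::finite \<Rightarrow> 'x2::finite \<Rightarrow> ('y1::finite \<times> 'y2::finite) \<Rightarrow> real) \<Rightarrow>
   nat \<Rightarrow> nat \<Rightarrow>
   (nat \<Rightarrow> 's1 list \<Rightarrow> 'y1 list \<Rightarrow> 'x1) \<Rightarrow>
   (nat \<Rightarrow> 's2 list \<Rightarrow> 'y2 list \<Rightarrow> 'x2) \<Rightarrow>
   ('y1 list \<Rightarrow> 's1 list \<Rightarrow> 's2 list) \<Rightarrow>
   ('y2 list \<Rightarrow> 's2 list \<Rightarrow> 's1 list) \<Rightarrow> real" where
  "error_prob P W m n f1 f2 g1 g2 =
     (\<Sum>s1\<in>{xs. length xs = m}. \<Sum>s2\<in>{xs. length xs = m}.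
      \<Sum>y1\<in>{ys. length ys = n}. \<Sum>y2\<in>{ys. length ys = n}.
        (\<Prod>k<m. P (s1 ! k, s2 ! k)) *
        (\<Prod>j<n. W (f1 j s1 (take j y1)) (f2 j s2 (take j y2)) (y1 ! j, y2 ! j)) *
        (if g2 y2 s2 \<noteq> s1 \<or> g1 y1 s1 \<noteq> s2 then 1 else 0))"

definition restricted_encoder :: "(nat \<Rightarrow> 's list \<Rightarrow> 'y list \<Rightarrow> 'x) \<Rightarrow> bool" where
  "restricted_encoder f \<longleftrightarrow> (\<forall>j s ys ys'. f j s ys = f j s ys')"

definition achievable_restricted ::
  "('s1::finite \<times> 's2::finite \<Rightarrow> real) \<Rightarrow>
   ('x1::finite \<Rightarrow> 'x2::finite \<Rightarrow> ('y1::finite \<times> 'y2::finite) \<Rightarrow> real) \<Rightarrow> real \<Rightarrow> bool" where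
  "achievable_restricted P W b \<longleftrightarrow>
     (\<forall>\<epsilon>>0. \<exists>m n. m > 0 \<and> n > 0 \<and> real n / real m = b \<and>
        (\<exists>(f1 :: nat \<Rightarrow> 's1 list \<Rightarrow> 'y1 list \<Rightarrow> 'x1) (f2 :: nat \<Rightarrow> 's2 list \<Rightarrow> 'y2 list \<Rightarrow> 'x2) g1 g2.
           restricted_encoder f1 \<and> restricted_encoder f2 \<and>
           error_prob P W m n f1 f2 g1 g2 < \<epsilon>))"

definition joint_dist ::
  "('q \<Rightarrow> real) \<Rightarrow> ('s1 \<times> 's2 \<Rightarrow> real) \<Rightarrow> ('q \<Rightarrow> 's1 \<Rightarrow> 'x1 \<Rightarrow> real) \<Rightarrow>
   ('q \<Rightarrow> 's2 \<Rightarrow> 'x2 \<Rightarrow> real) \<Rightarrow> ('x1 \<Rightarrow> 'x2 \<Rightarrow> ('y1 \<times> 'y2) \<Rightarrow> real) \<Rightarrow>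
   ('q \<times> 's1 \<times> 's2 \<times> 'x1 \<times> 'x2 \<times> 'y1 \<times> 'y2) \<Rightarrow> real" where
  "joint_dist pQ P V1 V2 W = (\<lambda>(q, s1, s2, x1, x2, y1, y2).
     pQ q * P (s1, s2) * V1 q s1 x1 * V2 q s2 x2 * W x1 x2 (y1, y2))"

end

theory Submission
  imports Defs "HOL-Library.FuncSet" "HOL-Analysis.Convex"
begin

(* Proof strategy: a random-coding argument with maximum-likelihood decoding and Gallager's
   error exponent, carried out separately for each direction of the two-way channel.

   Both users share a time-sharing word q drawn i.i.d. from p(q). User i maps every source word
   s_i of length n to a channel word drawn from the product law prod_j p(x_i | q_j, s_ij), all
   codewords independent; this encoder ignores past outputs, so it is restricted. User 2 decodes
   S_1^n from (Y_2^n, S_2^n, own codeword) by maximum likelihood, and symmetrically for user 1. *)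

section \<open>Sums over words and over random codebooks\<close>

definition words :: "nat \<Rightarrow> 'a list set" where "words n = {xs. length xs = n}"

lemma finite_words[simp]: "finite (words n :: ('a::finite) list set)"
  unfolding words_def using finite_lists_length_eq[of "UNIV::'a set" n] by simp

lemma words_Suc: "words (Suc n) = (\<lambda>(x,xs). x # xs) ` (UNIV \<times> words n)"
  unfolding words_def by (auto simp: length_Suc_conv image_def)

lemma words_nonempty: "words n \<noteq> {}"
  unfolding words_def by (auto intro!: exI[of _ "replicate n undefined"])

abbreviation codebooks :: "nat \<Rightarrow> ('a list \<Rightarrow> 'b list) set" where
  "codebooks n \<equiv> PiE (words n) (\<lambda>_. words n)"

lemma finite_codebooks: "finite (codebooks n :: ('a::finite list \<Rightarrow> 'b::finite list) set)"
  by (simp add: finite_PiE)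

text \<open>Sums of product weights over words factor coordinatewise: this is where the i.i.d.
  structure of sources, time sharing, encoders and channel enters.\<close>
lemma sum_words_prod:
  fixes f :: "nat \<Rightarrow> 'a::finite \<Rightarrow> 'c::comm_semiring_1"
  shows "(\<Sum>xs\<in>words n. \<Prod>j<n. f j (xs!j)) = (\<Prod>j<n. \<Sum>x\<in>UNIV. f j x)"
proof (induction n arbitrary: f)
  case 0
  then show ?case by (simp add: words_def)
next
  case (Suc n)
  have inj: "inj_on (\<lambda>(x,xs). x # xs) (UNIV \<times> words n)" by (auto simp: inj_on_def)
  have "(\<Sum>xs\<in>words (Suc n). \<Prod>j<Suc n. f j (xs!j))
      = (\<Sum>(x,xs)\<in>UNIV \<times> words n. \<Prod>j<Suc n. f j ((x#xs)!j))"
    unfolding words_Suc by (subst sum.reindex[OF inj]) (simp add: case_prod_beta)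
  also have "\<dots> = (\<Sum>x\<in>UNIV. \<Sum>xs\<in>words n. f 0 x * (\<Prod>j<n. f (Suc j) (xs!j)))"
    by (subst sum.cartesian_product[symmetric]) (simp add: prod.lessThan_Suc_shift del: prod.lessThan_Suc)
  also have "\<dots> = (\<Sum>x\<in>UNIV. f 0 x) * (\<Prod>j<n. \<Sum>x\<in>UNIV. f (Suc j) x)"
    unfolding sum_distrib_left[symmetric] Suc.IH[of "\<lambda>j. f (Suc j)"] by (simp add: sum_distrib_right)
  also have "\<dots> = (\<Prod>j<Suc n. \<Sum>x\<in>UNIV. f j x)"
    by (simp only: prod.lessThan_Suc_shift)
  finally show ?case .
qed

lemma sum_words_prod2:
  fixes f :: "nat \<Rightarrow> 'a::finite \<Rightarrow> 'b::finite \<Rightarrow> 'c::comm_semiring_1"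
  shows "(\<Sum>a\<in>words n. \<Sum>b\<in>words n. \<Prod>j<n. f j (a!j) (b!j)) = (\<Prod>j<n. \<Sum>a\<in>UNIV. \<Sum>b\<in>UNIV. f j a b)"
proof -
  have "(\<Sum>a\<in>words n. \<Sum>b\<in>words n. \<Prod>j<n. f j (a!j) (b!j)) = (\<Sum>a\<in>words n. \<Prod>j<n. \<Sum>b\<in>UNIV. f j (a!j) b)"
    by (rule sum.cong[OF refl], rule sum_words_prod[of "\<lambda>j x. f j (_!j) x"])
  also have "\<dots> = (\<Prod>j<n. \<Sum>a\<in>UNIV. \<Sum>b\<in>UNIV. f j a b)"
    by (rule sum_words_prod[of "\<lambda>j a. \<Sum>b\<in>UNIV. f j a b"])
  finally show ?thesis .
qed

lemma sum_words_prod3: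
  fixes f :: "nat \<Rightarrow> 'a::finite \<Rightarrow> 'b::finite \<Rightarrow> 'd::finite \<Rightarrow> 'c::comm_semiring_1"
  shows "(\<Sum>a\<in>words n. \<Sum>b\<in>words n. \<Sum>c\<in>words n. \<Prod>j<n. f j (a!j) (b!j) (c!j)) = (\<Prod>j<n. \<Sum>a\<in>UNIV. \<Sum>b\<in>UNIV. \<Sum>c\<in>UNIV. f j a b c)"
proof -
  have "(\<Sum>a\<in>words n. \<Sum>b\<in>words n. \<Sum>c\<in>words n. \<Prod>j<n. f j (a!j) (b!j) (c!j)) = (\<Sum>a\<in>words n. \<Prod>j<n. \<Sum>b\<in>UNIV. \<Sum>c\<in>UNIV. f j (a!j) b c)"
    by (rule sum.cong[OF refl], rule sum_words_prod2[of "\<lambda>j x y. f j (_!j) x y"])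
  also have "\<dots> = (\<Prod>j<n. \<Sum>a\<in>UNIV. \<Sum>b\<in>UNIV. \<Sum>c\<in>UNIV. f j a b c)"
    by (rule sum_words_prod[of "\<lambda>j a. \<Sum>b\<in>UNIV. \<Sum>c\<in>UNIV. f j a b c"])
  finally show ?thesis .
qed

lemma sum_words_prod4:
  fixes f :: "nat \<Rightarrow> 'a::finite \<Rightarrow> 'b::finite \<Rightarrow> 'd::finite \<Rightarrow> 'e::finite \<Rightarrow> 'c::comm_semiring_1"
  shows "(\<Sum>a\<in>words n. \<Sum>b\<in>words n. \<Sum>c\<in>words n. \<Sum>d\<in>words n. \<Prod>j<n. f j (a!j) (b!j) (c!j) (d!j)) = (\<Prod>j<n. \<Sum>a\<in>UNIV. \<Sum>b\<in>UNIV. \<Sum>c\<in>UNIV. \<Sum>d\<in>UNIV. f j a b c d)"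
proof -
  have "(\<Sum>a\<in>words n. \<Sum>b\<in>words n. \<Sum>c\<in>words n. \<Sum>d\<in>words n. \<Prod>j<n. f j (a!j) (b!j) (c!j) (d!j)) = (\<Sum>a\<in>words n. \<Prod>j<n. \<Sum>b\<in>UNIV. \<Sum>c\<in>UNIV. \<Sum>d\<in>UNIV. f j (a!j) b c d)"
    by (rule sum.cong[OF refl], rule sum_words_prod3[of "\<lambda>j x y z. f j (_!j) x y z"])
  also have "\<dots> = (\<Prod>j<n. \<Sum>a\<in>UNIV. \<Sum>b\<in>UNIV. \<Sum>c\<in>UNIV. \<Sum>d\<in>UNIV. f j a b c d)"
    by (rule sum_words_prod[of "\<lambda>j a. \<Sum>b\<in>UNIV. \<Sum>c\<in>UNIV. \<Sum>d\<in>UNIV. f j a b c d"])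
  finally show ?thesis .
qed

lemma sum_UNIV_pair: "(\<Sum>w\<in>(UNIV::('a::finite\<times>'b::finite) set). g w) = (\<Sum>a\<in>UNIV. \<Sum>b\<in>UNIV. g (a,b))"
  by (simp add: sum.cartesian_product UNIV_Times_UNIV[symmetric] del: UNIV_Times_UNIV)

lemma sum_PiE_marginal:
  fixes \<mu> :: "'a \<Rightarrow> 'b \<Rightarrow> real"
  assumes A: "finite A" and B: "finite B" and a0: "a0 \<in> A"
    and one: "\<And>a. a \<in> A \<Longrightarrow> (\<Sum>b\<in>B. \<mu> a b) = 1"
  shows "(\<Sum>c\<in>PiE A (\<lambda>_. B). (\<Prod>a\<in>A. \<mu> a (c a)) * \<phi> (c a0)) = (\<Sum>b\<in>B. \<mu> a0 b * \<phi> b)"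
proof -
  define f where "f a b = \<mu> a b * (if a = a0 then \<phi> b else 1)" for a b
  have "(\<Prod>a\<in>A. \<Sum>b\<in>B. f a b) = (\<Sum>c\<in>PiE A (\<lambda>_. B). \<Prod>a\<in>A. f a (c a))"
    by (rule prod_sum_PiE) (use A B in auto)
  moreover have "(\<Prod>a\<in>A. \<Sum>b\<in>B. f a b) = (\<Sum>b\<in>B. \<mu> a0 b * \<phi> b)"
  proof -
    have "(\<Prod>a\<in>A. \<Sum>b\<in>B. f a b) = (\<Sum>b\<in>B. f a0 b) * (\<Prod>a\<in>A-{a0}. \<Sum>b\<in>B. f a b)"
      using A a0 by (simp add: prod.remove)
    also have "(\<Prod>a\<in>A-{a0}. \<Sum>b\<in>B. f a b) = 1"
      by (rule prod.neutral) (auto simp: f_def one)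
    finally show ?thesis by (simp add: f_def)
  qed
  moreover have "\<And>c. (\<Prod>a\<in>A. f a (c a)) = (\<Prod>a\<in>A. \<mu> a (c a)) * \<phi> (c a0)"
  proof -
    fix c
    have "(\<Prod>a\<in>A. f a (c a)) = (\<Prod>a\<in>A. \<mu> a (c a)) * (\<Prod>a\<in>A. if a = a0 then \<phi> (c a) else 1)"
      by (simp add: f_def prod.distrib)
    also have "(\<Prod>a\<in>A. if a = a0 then \<phi> (c a) else 1) = \<phi> (c a0)"
      using A a0 by (simp add: prod.delta)
    finally show "(\<Prod>a\<in>A. f a (c a)) = (\<Prod>a\<in>A. \<mu> a (c a)) * \<phi> (c a0)" .
  qed
  ultimately show ?thesis by simp
qed

lemma sum_PiE_total:
  fixes \<mu> :: "'a \<Rightarrow> 'b \<Rightarrow> real"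
  assumes A: "finite A" and B: "finite B"
    and one: "\<And>a. a \<in> A \<Longrightarrow> (\<Sum>b\<in>B. \<mu> a b) = 1"
  shows "(\<Sum>c\<in>PiE A (\<lambda>_. B). (\<Prod>a\<in>A. \<mu> a (c a))) = 1"
proof -
  have "(\<Prod>a\<in>A. \<Sum>b\<in>B. \<mu> a b) = (\<Sum>c\<in>PiE A (\<lambda>_. B). \<Prod>a\<in>A. \<mu> a (c a))"
    by (rule prod_sum_PiE) (use A B in auto)
  moreover have "(\<Prod>a\<in>A. \<Sum>b\<in>B. \<mu> a b) = 1" by (rule prod.neutral) (simp add: one)
  ultimately show ?thesis by simp
qed

lemma sum_PiE_additive:
  fixes \<mu> :: "'a \<Rightarrow> 'b \<Rightarrow> real"
  assumes A: "finite A" and B: "finite B" and S: "S \<subseteq> A"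
    and one: "\<And>a. a \<in> A \<Longrightarrow> (\<Sum>b\<in>B. \<mu> a b) = 1"
  shows "(\<Sum>c\<in>PiE A (\<lambda>_. B). (\<Prod>a\<in>A. \<mu> a (c a)) * (\<Sum>a\<in>S. h a (c a)))
      = (\<Sum>a\<in>S. \<Sum>b\<in>B. \<mu> a b * h a b)"
proof -
  have "(\<Sum>c\<in>PiE A (\<lambda>_. B). (\<Prod>a\<in>A. \<mu> a (c a)) * (\<Sum>a\<in>S. h a (c a)))
      = (\<Sum>a\<in>S. \<Sum>c\<in>PiE A (\<lambda>_. B). (\<Prod>a\<in>A. \<mu> a (c a)) * h a (c a))"
    by (simp add: sum_distrib_left sum.swap[of _ S])
  also have "\<dots> = (\<Sum>a\<in>S. \<Sum>b\<in>B. \<mu> a b * h a b)"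
    by (rule sum.cong[OF refl], rule sum_PiE_marginal) (use A B S one in auto)
  finally show ?thesis .
qed

lemma jensen_powr_concave:
  fixes w x :: "'i \<Rightarrow> real"
  assumes I: "finite I" and w: "\<And>i. i \<in> I \<Longrightarrow> w i \<ge> 0" and w1: "(\<Sum>i\<in>I. w i) = 1"
    and x: "\<And>i. i \<in> I \<Longrightarrow> x i \<ge> 0" and r: "0 < r" "r < 1"
  shows "(\<Sum>i\<in>I. w i * x i powr r) \<le> (\<Sum>i\<in>I. w i * x i) powr r"
proof -
  define M where "M = (\<Sum>i\<in>I. w i * x i)"
  have M0: "M \<ge> 0" unfolding M_def using w x by (intro sum_nonneg) auto
  show ?thesis
  proof (cases "M = 0")
    case True
    have "\<forall>i\<in>I. w i * x i = 0"
      using True I w x unfolding M_def by (subst sum_nonneg_eq_0_iff[symmetric]) auto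
    then have z: "\<forall>i\<in>I. w i * x i powr r = 0" by auto
    have "(\<Sum>i\<in>I. w i * x i powr r) = 0" using z by (intro sum.neutral) blast
    then show ?thesis using True unfolding M_def by simp
  next
    case False
    then have Mp: "M > 0" using M0 by simp
    have key: "x i powr r \<le> M powr r * (r * (x i / M) + (1 - r))" if i: "i \<in> I" for i
    proof (cases "x i = 0")
      case True then show ?thesis using r Mp by simp
    next
      case False
      then have xp: "x i / M > 0" using x[OF i] Mp by simp
      have "(x i / M) powr r * 1 powr (1 - r) \<le> r * (x i / M) + (1 - r) * 1"
        by (rule Youngs_inequality_0) (use r xp in auto)
      then have "x i powr r / M powr r \<le> r * (x i / M) + (1 - r)"
        using x[OF i] Mp by (simp add: powr_divide)
      then show ?thesis using Mp by (simp add: divide_le_eq mult.commute)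
    qed
    have "(\<Sum>i\<in>I. w i * x i powr r) \<le> (\<Sum>i\<in>I. w i * (M powr r * (r * (x i / M) + (1 - r))))"
      by (rule sum_mono) (use key w in \<open>auto intro: mult_left_mono\<close>)
    also have "\<dots> = (\<Sum>i\<in>I. (M powr r * (r / M)) * (w i * x i) + (M powr r * (1 - r)) * w i)"
      by (rule sum.cong) (simp_all add: algebra_simps)
    also have "\<dots> = (M powr r * (r / M)) * (\<Sum>i\<in>I. w i * x i) + (M powr r * (1 - r)) * (\<Sum>i\<in>I. w i)"
      by (simp only: sum.distrib sum_distrib_left)
    also have "\<dots> = M powr r" using Mp w1 by (simp add: M_def[symmetric] field_simps)
    finally show ?thesis by (simp add: M_def)
  qed
qed

text \<open>The central averaging step of Gallager's bound: averaging over all codewords except the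
  transmitted one, a power r of their total likelihood is at most the power of its mean.\<close>
lemma sum_PiE_jensen:
  fixes \<mu> :: "'a \<Rightarrow> 'b \<Rightarrow> real"
  assumes A: "finite A" and B: "finite B" and a0: "a0 \<in> A"
    and mu: "\<And>a b. 0 \<le> \<mu> a b"
    and one: "\<And>a. a \<in> A \<Longrightarrow> (\<Sum>b\<in>B. \<mu> a b) = 1"
    and F: "\<And>b. 0 \<le> F b" and h: "\<And>a b. 0 \<le> h a b" and r: "0 < r" "r < 1"
  shows "(\<Sum>c\<in>PiE A (\<lambda>_. B). (\<Prod>a\<in>A. \<mu> a (c a)) * (F (c a0) * (\<Sum>a\<in>A-{a0}. h a (c a)) powr r))
      \<le> (\<Sum>b\<in>B. \<mu> a0 b * F b) * (\<Sum>a\<in>A. \<Sum>b\<in>B. \<mu> a b * h a b) powr r"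
proof -
  define A' where "A' = A - {a0}"
  have AA: "A = insert a0 A'" and a0A': "a0 \<notin> A'" and fA': "finite A'" using a0 A by (auto simp: A'_def)
  define w where "w g = (\<Prod>a\<in>A'. \<mu> a (g a))" for g
  define S where "S g = (\<Sum>a\<in>A'. h a (g a))" for g
  define G where "G c = (\<Prod>a\<in>A. \<mu> a (c a)) * (F (c a0) * (\<Sum>a\<in>A-{a0}. h a (c a)) powr r)" for c
  have "(\<Sum>c\<in>PiE A (\<lambda>_. B). G c) = (\<Sum>(y,g)\<in>B \<times> PiE A' (\<lambda>_. B). G (g(a0:=y)))"
    unfolding AA PiE_insert_eq by (subst sum.reindex[OF inj_combinator[OF a0A']]) (simp add: case_prod_beta)
  also have "\<dots> = (\<Sum>(y,g)\<in>B \<times> PiE A' (\<lambda>_. B). (\<mu> a0 y * F y) * (w g * S g powr r))"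
  proof (rule sum.cong[OF refl], clarify)
    fix y g
    have p: "(\<Prod>a\<in>A. \<mu> a ((g(a0:=y)) a)) = \<mu> a0 y * w g"
      unfolding AA w_def using fA' a0A' by (auto intro!: prod.cong)
    have s: "(\<Sum>a\<in>A-{a0}. h a ((g(a0:=y)) a)) = S g"
      unfolding S_def A'_def by (rule sum.cong) auto
    show "G (g(a0:=y)) = (\<mu> a0 y * F y) * (w g * S g powr r)"
      unfolding G_def p s by simp
  qed
  also have "\<dots> = (\<Sum>b\<in>B. \<mu> a0 b * F b) * (\<Sum>g\<in>PiE A' (\<lambda>_. B). w g * S g powr r)"
    by (simp add: sum.cartesian_product[symmetric] sum_product)
  also have "\<dots> \<le> (\<Sum>b\<in>B. \<mu> a0 b * F b) * (\<Sum>a\<in>A. \<Sum>b\<in>B. \<mu> a b * h a b) powr r"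
  proof (rule mult_left_mono)
    show "0 \<le> (\<Sum>b\<in>B. \<mu> a0 b * F b)" using mu F by (intro sum_nonneg) auto
    have "(\<Sum>g\<in>PiE A' (\<lambda>_. B). w g * S g powr r) \<le> (\<Sum>g\<in>PiE A' (\<lambda>_. B). w g * S g) powr r"
    proof (rule jensen_powr_concave)
      show "finite (PiE A' (\<lambda>_. B))" using fA' B by (simp add: finite_PiE)
      show "(\<Sum>g\<in>PiE A' (\<lambda>_. B). w g) = 1" unfolding w_def
        by (rule sum_PiE_total) (use fA' B one in \<open>auto simp: A'_def\<close>)
    qed (use r mu h in \<open>auto simp: w_def S_def intro!: prod_nonneg sum_nonneg\<close>)
    also have "(\<Sum>g\<in>PiE A' (\<lambda>_. B). w g * S g) = (\<Sum>a\<in>A'. \<Sum>b\<in>B. \<mu> a b * h a b)"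
      unfolding w_def S_def by (rule sum_PiE_additive) (use fA' B one in \<open>auto simp: A'_def\<close>)
    also have "\<dots> powr r \<le> (\<Sum>a\<in>A. \<Sum>b\<in>B. \<mu> a b * h a b) powr r"
    proof (rule powr_mono2)
      show "0 \<le> r" using r by simp
      show "0 \<le> (\<Sum>a\<in>A'. \<Sum>b\<in>B. \<mu> a b * h a b)" using mu h by (intro sum_nonneg mult_nonneg_nonneg) auto
      show "(\<Sum>a\<in>A'. \<Sum>b\<in>B. \<mu> a b * h a b) \<le> (\<Sum>a\<in>A. \<Sum>b\<in>B. \<mu> a b * h a b)"
        using A mu h by (intro sum_mono2) (auto simp: A'_def intro!: sum_nonneg)
    qed
    finally show "(\<Sum>g\<in>PiE A' (\<lambda>_. B). w g * S g powr r) \<le> (\<Sum>a\<in>A. \<Sum>b\<in>B. \<mu> a b * h a b) powr r" .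
  qed
  finally show ?thesis unfolding G_def .
qed

lemma sum_weighted_swap3:
  fixes w :: "'c \<Rightarrow> real"
  shows "(\<Sum>c\<in>C. w c * (\<Sum>a\<in>A. \<Sum>b\<in>B. \<Sum>d\<in>D. T c a b d)) = (\<Sum>a\<in>A. \<Sum>b\<in>B. \<Sum>d\<in>D. \<Sum>c\<in>C. w c * T c a b d)"
proof -
  have "(\<Sum>c\<in>C. w c * (\<Sum>a\<in>A. \<Sum>b\<in>B. \<Sum>d\<in>D. T c a b d)) = (\<Sum>c\<in>C. \<Sum>a\<in>A. \<Sum>b\<in>B. \<Sum>d\<in>D. w c * T c a b d)"
    by (simp add: sum_distrib_left)
  also have "\<dots> = (\<Sum>a\<in>A. \<Sum>c\<in>C. \<Sum>b\<in>B. \<Sum>d\<in>D. w c * T c a b d)" by (rule sum.swap)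
  also have "\<dots> = (\<Sum>a\<in>A. \<Sum>b\<in>B. \<Sum>c\<in>C. \<Sum>d\<in>D. w c * T c a b d)" by (rule sum.cong[OF refl], rule sum.swap)
  also have "\<dots> = (\<Sum>a\<in>A. \<Sum>b\<in>B. \<Sum>d\<in>D. \<Sum>c\<in>C. w c * T c a b d)" by (rule sum.cong[OF refl], rule sum.cong[OF refl], rule sum.swap)
  finally show ?thesis .
qed

lemma sum_weighted_swap:
  fixes w :: "'c \<Rightarrow> real"
  shows "(\<Sum>c\<in>C. w c * (\<Sum>d\<in>D. v d * T c d)) = (\<Sum>d\<in>D. v d * (\<Sum>c\<in>C. w c * T c d))"
proof -
  have "(\<Sum>c\<in>C. w c * (\<Sum>d\<in>D. v d * T c d)) = (\<Sum>c\<in>C. \<Sum>d\<in>D. v d * (w c * T c d))"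
    by (simp add: sum_distrib_left mult.left_commute)
  also have "\<dots> = (\<Sum>d\<in>D. \<Sum>c\<in>C. v d * (w c * T c d))" by (rule sum.swap)
  also have "\<dots> = (\<Sum>d\<in>D. v d * (\<Sum>c\<in>C. w c * T c d))" by (simp only: sum_distrib_left)
  finally show ?thesis .
qed

lemma exists_below_weighted_average:
  fixes w f :: "'a \<Rightarrow> real"
  assumes "finite A" "\<And>a. 0 \<le> w a" "(\<Sum>a\<in>A. w a) = 1" "(\<Sum>a\<in>A. w a * f a) < \<epsilon>"
  obtains a where "a \<in> A" "f a < \<epsilon>"
proof (rule ccontr)
  assume "\<not> thesis"
  then have "\<forall>a\<in>A. \<epsilon> \<le> f a" using that by force
  then have "(\<Sum>a\<in>A. w a * \<epsilon>) \<le> (\<Sum>a\<in>A. w a * f a)"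
    by (intro sum_mono mult_left_mono) (auto simp: assms(2))
  then show False using assms(3,4) by (simp add: sum_distrib_right[symmetric])
qed

section \<open>Gallager's bound for one direction of the channel\<close>

text \<open>The sender observes a (law Va of its input given
  time sharing q and source letter a), the receiver observes b and sends its own input (law Vb);
  Ps is the source pmf and Wb the channel from (xa, xb) to the receiver's output.\<close>
locale one_way_link =
  fixes pQ :: "'q::finite \<Rightarrow> real" and Ps :: "'a::finite \<Rightarrow> 'b::finite \<Rightarrow> real"
    and Va :: "'q \<Rightarrow> 'a \<Rightarrow> 'xa::finite \<Rightarrow> real" and Vb :: "'q \<Rightarrow> 'b \<Rightarrow> 'xb::finite \<Rightarrow> real"
    and Wb :: "'xa \<Rightarrow> 'xb \<Rightarrow> 'yb::finite \<Rightarrow> real"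
  assumes pQ: "is_pmf pQ" and Va: "\<And>q a. is_pmf (Va q a)" and Vb: "\<And>q b. is_pmf (Vb q b)"
    and Ps_nonneg: "\<And>a b. 0 \<le> Ps a b" and Wb_nonneg: "\<And>xa xb y. 0 \<le> Wb xa xb y"
begin

text \<open>Probabilities of words, and the likelihood of the sender's source word s with codeword x
  given everything the receiver knows: its source word sb, its output yb and its input xb.\<close>
definition "src_word_prob n sa sb = (\<Prod>j<n. Ps (sa!j) (sb!j))"

definition "chan_word_prob n xa xb yb = (\<Prod>j<n. Wb (xa!j) (xb!j) (yb!j))"

definition "likelihood n sb yb xb s x = src_word_prob n s sb * chan_word_prob n x xb yb"

definition "ml_decode n ca cb yb sb = (SOME s. s \<in> words n \<and> (\<forall>s'\<in>words n. likelihood n sb yb (cb sb) s' (ca s') \<le> likelihood n sb yb (cb sb) s (ca s)))"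

definition "decoding_error n ca cb = (\<Sum>sa\<in>words n. \<Sum>sb\<in>words n. \<Sum>yb\<in>words n.
   likelihood n sb yb (cb sb) sa (ca sa) * (if ml_decode n ca cb yb sb \<noteq> sa then 1 else 0))"

definition "enc_word_a n q s x = (\<Prod>j<n. Va (q!j) (s!j) (x!j))"

definition "enc_word_b n q s x = (\<Prod>j<n. Vb (q!j) (s!j) (x!j))"

definition "tq_word_prob n q = (\<Prod>j<n. pQ (q!j))"

definition "codebook_prob_a n q ca = (\<Prod>s\<in>words n. enc_word_a n q s (ca s))"

definition "codebook_prob_b n q cb = (\<Prod>s\<in>words n. enc_word_b n q s (cb s))"

definition "ensemble_avg n F = (\<Sum>q\<in>words n. tq_word_prob n q * (\<Sum>ca\<in>codebooks n. codebook_prob_a n q ca *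
    (\<Sum>cb\<in>codebooks n. codebook_prob_b n q cb * F ca cb)))"
definition "ensemble_error n = ensemble_avg n (decoding_error n)"

text \<open>Gallager's single-letter quantities; gallager_base r is the per-letter factor of the
  ensemble error bound.\<close>
definition "gallager_alpha r q a b y xb = (\<Sum>xa\<in>UNIV. Va q a xa * (Ps a b * Wb xa xb y) powr (1-r))"

definition "out_law q b y xb = (\<Sum>a'\<in>UNIV. \<Sum>x'\<in>UNIV. Va q a' x' * Ps a' b * Wb x' xb y)"

definition "gallager_base r = (\<Sum>q\<in>UNIV. pQ q * (\<Sum>a\<in>UNIV. \<Sum>b\<in>UNIV. \<Sum>y\<in>UNIV. \<Sum>xb\<in>UNIV.
   Vb q b xb * (gallager_alpha r q a b y xb * out_law q b y xb powr r)))"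

lemma Va_nonneg: "0 \<le> Va q a x" using Va unfolding is_pmf_def by auto

lemma Vb_nonneg: "0 \<le> Vb q a x" using Vb unfolding is_pmf_def by auto

lemma pQ_nonneg: "0 \<le> pQ q" using pQ unfolding is_pmf_def by auto

lemma enc_word_a_nonneg: "0 \<le> enc_word_a n q s x" unfolding enc_word_a_def by (intro prod_nonneg) (auto simp: Va_nonneg)

lemma enc_word_b_nonneg: "0 \<le> enc_word_b n q s x" unfolding enc_word_b_def by (intro prod_nonneg) (auto simp: Vb_nonneg)

lemma likelihood_nonneg: "0 \<le> likelihood n sb yb xb s x" unfolding likelihood_def src_word_prob_def chan_word_prob_def
  by (intro mult_nonneg_nonneg prod_nonneg) (auto simp: Ps_nonneg Wb_nonneg)

lemma enc_word_a_total: "(\<Sum>x\<in>words n. enc_word_a n q s x) = 1"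
  unfolding enc_word_a_def using sum_words_prod[of "\<lambda>j x. Va (q!j) (s!j) x" n] Va by (simp add: is_pmf_def)

lemma enc_word_b_total: "(\<Sum>x\<in>words n. enc_word_b n q s x) = 1"
  unfolding enc_word_b_def using sum_words_prod[of "\<lambda>j x. Vb (q!j) (s!j) x" n] Vb by (simp add: is_pmf_def)

lemma tq_word_prob_nonneg: "0 \<le> tq_word_prob n q"
  unfolding tq_word_prob_def by (intro prod_nonneg) (auto simp: pQ_nonneg)
lemma codebook_prob_a_nonneg: "0 \<le> codebook_prob_a n q ca"
  unfolding codebook_prob_a_def by (intro prod_nonneg) (auto simp: enc_word_a_nonneg)
lemma codebook_prob_b_nonneg: "0 \<le> codebook_prob_b n q cb"
  unfolding codebook_prob_b_def by (intro prod_nonneg) (auto simp: enc_word_b_nonneg)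

lemma tq_word_prob_total: "(\<Sum>q\<in>words n. tq_word_prob n q) = 1"
  unfolding tq_word_prob_def using sum_words_prod[of "\<lambda>j q. pQ q" n] pQ by (simp add: is_pmf_def)
lemma codebook_prob_a_total: "(\<Sum>ca\<in>codebooks n. codebook_prob_a n q ca) = 1"
  unfolding codebook_prob_a_def by (rule sum_PiE_total) (auto simp: enc_word_a_total)
lemma codebook_prob_b_total: "(\<Sum>cb\<in>codebooks n. codebook_prob_b n q cb) = 1"
  unfolding codebook_prob_b_def by (rule sum_PiE_total) (auto simp: enc_word_b_total)

lemma ensemble_avg_mono:
  assumes "\<And>ca cb. ca \<in> codebooks n \<Longrightarrow> cb \<in> codebooks n \<Longrightarrow> F ca cb \<le> G ca cb"
  shows "ensemble_avg n F \<le> ensemble_avg n G"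
  unfolding ensemble_avg_def using assms
  by (intro sum_mono mult_left_mono tq_word_prob_nonneg codebook_prob_a_nonneg codebook_prob_b_nonneg) auto

lemma ensemble_avg_add: "ensemble_avg n (\<lambda>ca cb. F ca cb + G ca cb) = ensemble_avg n F + ensemble_avg n G"
  unfolding ensemble_avg_def by (simp add: distrib_left sum.distrib)

lemma exists_below_ensemble_avg:
  assumes "ensemble_avg n F < \<epsilon>"
  obtains ca cb where "ca \<in> codebooks n" "cb \<in> codebooks n" "F ca cb < \<epsilon>"
proof -
  obtain q where "q \<in> words n"
    and avg_q: "(\<Sum>ca\<in>codebooks n. codebook_prob_a n q ca * (\<Sum>cb\<in>codebooks n. codebook_prob_b n q cb * F ca cb)) < \<epsilon>"
    by (rule exists_below_weighted_average[OF finite_words tq_word_prob_nonneg tq_word_prob_total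
          assms[unfolded ensemble_avg_def]])
  obtain ca where ca: "ca \<in> codebooks n" and avg_ca: "(\<Sum>cb\<in>codebooks n. codebook_prob_b n q cb * F ca cb) < \<epsilon>"
    by (rule exists_below_weighted_average[OF finite_codebooks codebook_prob_a_nonneg codebook_prob_a_total avg_q])
  obtain cb where "cb \<in> codebooks n" "F ca cb < \<epsilon>"
    by (rule exists_below_weighted_average[OF finite_codebooks codebook_prob_b_nonneg codebook_prob_b_total avg_ca])
  with ca show ?thesis by (rule that)
qed

text \<open>The decoder really maximises the likelihood (the candidate set is finite and nonempty).\<close>
lemma ml_decode_spec:
  "ml_decode n ca cb yb sb \<in> words n \<and> (\<forall>s'\<in>words n. likelihood n sb yb (cb sb) s' (ca s') \<le> likelihood n sb yb (cb sb) (ml_decode n ca cb yb sb) (ca (ml_decode n ca cb yb sb)))"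
proof -
  define f where "f s = likelihood n sb yb (cb sb) s (ca s)" for s
  have "Max (f ` words n) \<in> f ` words n" using words_nonempty by (intro Max_in) auto
  then obtain s where s: "s \<in> words n" "f s = Max (f ` words n)" by auto
  have "\<forall>s'\<in>words n. f s' \<le> f s" using s by auto
  then have "\<exists>s. s \<in> words n \<and> (\<forall>s'\<in>words n. f s' \<le> f s)" using s by blast
  then show ?thesis unfolding ml_decode_def f_def by (rule someI_ex)
qed

text \<open>Error indicator bound: if decoding fails, some wrong word is at least as likely as the true
  one, so the indicator is at most the ratio of their likelihoods raised to the power r.\<close>
lemma error_indicator_bound:
  assumes sa: "sa \<in> words n" and r: "0 < r" "r < 1"
  shows "likelihood n sb yb (cb sb) sa (ca sa) * (if ml_decode n ca cb yb sb \<noteq> sa then 1 else 0)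
    \<le> likelihood n sb yb (cb sb) sa (ca sa) powr (1-r) * (\<Sum>s\<in>words n - {sa}. likelihood n sb yb (cb sb) s (ca s)) powr r"
proof (cases "ml_decode n ca cb yb sb \<noteq> sa")
  case True
  define f where "f s = likelihood n sb yb (cb sb) s (ca s)" for s
  define d where "d = ml_decode n ca cb yb sb"
  have d: "d \<in> words n - {sa}" using ml_decode_spec True by (auto simp: d_def)
  have "f sa \<le> f d" using ml_decode_spec sa unfolding f_def d_def by blast
  also have "f d \<le> (\<Sum>s\<in>words n - {sa}. f s)"
    using d by (intro member_le_sum) (auto simp: f_def likelihood_nonneg)
  finally have le: "f sa \<le> (\<Sum>s\<in>words n - {sa}. f s)" .
  have f0: "0 \<le> f sa" by (simp add: f_def likelihood_nonneg)
  show ?thesis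
  proof (cases "f sa = 0")
    case True then show ?thesis by (simp add: f_def)
  next
    case False
    then have fp: "f sa > 0" using f0 by simp
    have "f sa = f sa powr (1-r) * f sa powr r" using fp by (simp add: powr_add[symmetric])
    also have "\<dots> \<le> f sa powr (1-r) * (\<Sum>s\<in>words n - {sa}. f s) powr r"
      using le f0 r by (intro mult_left_mono powr_mono2) auto
    finally show ?thesis using True by (simp add: f_def)
  qed
qed (simp add: likelihood_nonneg)

definition "gallager_word_bound n r q sa sb yb xb = (\<Sum>x\<in>words n. enc_word_a n q sa x * likelihood n sb yb xb sa x powr (1-r)) *
   (\<Sum>s\<in>words n. \<Sum>x\<in>words n. enc_word_a n q s x * likelihood n sb yb xb s x) powr r"

lemma codebook_average_a:
  assumes sa: "sa \<in> words n" and r: "0 < r" "r < 1"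
  shows "(\<Sum>ca\<in>codebooks n. codebook_prob_a n q ca * (likelihood n sb yb (cb sb) sa (ca sa) powr (1-r) *
      (\<Sum>s\<in>words n - {sa}. likelihood n sb yb (cb sb) s (ca s)) powr r)) \<le> gallager_word_bound n r q sa sb yb (cb sb)"
  unfolding codebook_prob_a_def gallager_word_bound_def
  by (rule sum_PiE_jensen[where \<mu>="enc_word_a n q" and F="\<lambda>x. likelihood n sb yb (cb sb) sa x powr (1-r)"
        and h="\<lambda>s x. likelihood n sb yb (cb sb) s x"]) (use sa r in \<open>auto simp: enc_word_a_nonneg enc_word_a_total likelihood_nonneg\<close>)

lemma ensemble_bound_fixed_tq:
  assumes r: "0 < r" "r < 1"
  shows "(\<Sum>ca\<in>codebooks n. codebook_prob_a n q ca * (\<Sum>cb\<in>codebooks n. codebook_prob_b n q cb * decoding_error n ca cb))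
    \<le> (\<Sum>sa\<in>words n. \<Sum>sb\<in>words n. \<Sum>yb\<in>words n. \<Sum>xb\<in>words n. enc_word_b n q sb xb * gallager_word_bound n r q sa sb yb xb)"
proof -
  let ?C = "codebooks n"
  have "(\<Sum>ca\<in>?C. codebook_prob_a n q ca * (\<Sum>cb\<in>?C. codebook_prob_b n q cb * decoding_error n ca cb))
      = (\<Sum>cb\<in>?C. codebook_prob_b n q cb * (\<Sum>ca\<in>?C. codebook_prob_a n q ca * decoding_error n ca cb))"
    by (rule sum_weighted_swap)
  also have "\<dots> \<le> (\<Sum>cb\<in>?C. codebook_prob_b n q cb * (\<Sum>sa\<in>words n. \<Sum>sb\<in>words n. \<Sum>yb\<in>words n. gallager_word_bound n r q sa sb yb (cb sb)))"
  proof (rule sum_mono, rule mult_left_mono[OF _ codebook_prob_b_nonneg])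
    fix cb
    have "(\<Sum>ca\<in>?C. codebook_prob_a n q ca * decoding_error n ca cb) \<le> (\<Sum>ca\<in>?C. codebook_prob_a n q ca * (\<Sum>sa\<in>words n. \<Sum>sb\<in>words n. \<Sum>yb\<in>words n.
        likelihood n sb yb (cb sb) sa (ca sa) powr (1-r) * (\<Sum>s\<in>words n - {sa}. likelihood n sb yb (cb sb) s (ca s)) powr r))"
      unfolding decoding_error_def
      by (intro sum_mono mult_left_mono[OF _ codebook_prob_a_nonneg] error_indicator_bound r)
    also have "\<dots> = (\<Sum>sa\<in>words n. \<Sum>sb\<in>words n. \<Sum>yb\<in>words n. \<Sum>ca\<in>?C. codebook_prob_a n q ca *
        (likelihood n sb yb (cb sb) sa (ca sa) powr (1-r) * (\<Sum>s\<in>words n - {sa}. likelihood n sb yb (cb sb) s (ca s)) powr r))"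
      by (rule sum_weighted_swap3)
    also have "\<dots> \<le> (\<Sum>sa\<in>words n. \<Sum>sb\<in>words n. \<Sum>yb\<in>words n. gallager_word_bound n r q sa sb yb (cb sb))"
      by (intro sum_mono codebook_average_a r)
    finally show "(\<Sum>ca\<in>?C. codebook_prob_a n q ca * decoding_error n ca cb) \<le> (\<Sum>sa\<in>words n. \<Sum>sb\<in>words n. \<Sum>yb\<in>words n. gallager_word_bound n r q sa sb yb (cb sb))" .
  qed
  also have "\<dots> = (\<Sum>sa\<in>words n. \<Sum>sb\<in>words n. \<Sum>yb\<in>words n. \<Sum>cb\<in>?C. codebook_prob_b n q cb * gallager_word_bound n r q sa sb yb (cb sb))"
    by (rule sum_weighted_swap3)
  also have "\<dots> = (\<Sum>sa\<in>words n. \<Sum>sb\<in>words n. \<Sum>yb\<in>words n. \<Sum>xb\<in>words n. enc_word_b n q sb xb * gallager_word_bound n r q sa sb yb xb)"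
    unfolding codebook_prob_b_def by (intro sum.cong refl sum_PiE_marginal) (auto simp: enc_word_b_total)
  finally show ?thesis .
qed

lemma gallager_word_bound_factor:
  "gallager_word_bound n r q sa sb yb xb = (\<Prod>j<n. gallager_alpha r (q!j) (sa!j) (sb!j) (yb!j) (xb!j) * out_law (q!j) (sb!j) (yb!j) (xb!j) powr r)"
proof -
  have a1: "(\<Sum>x\<in>words n. enc_word_a n q sa x * likelihood n sb yb xb sa x powr (1-r))
      = (\<Sum>x\<in>words n. \<Prod>j<n. Va (q!j) (sa!j) (x!j) * (Ps (sa!j) (sb!j) * Wb (x!j) (xb!j) (yb!j)) powr (1-r))"
    by (rule sum.cong[OF refl]) (simp add: enc_word_a_def likelihood_def src_word_prob_def chan_word_prob_def prod.distrib prod_powr_distrib powr_mult)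
  also have "\<dots> = (\<Prod>j<n. gallager_alpha r (q!j) (sa!j) (sb!j) (yb!j) (xb!j))"
    unfolding gallager_alpha_def
    by (rule sum_words_prod[of "\<lambda>j x. Va (q!j) (sa!j) x * (Ps (sa!j) (sb!j) * Wb x (xb!j) (yb!j)) powr (1-r)"])
  finally have a: "(\<Sum>x\<in>words n. enc_word_a n q sa x * likelihood n sb yb xb sa x powr (1-r)) = (\<Prod>j<n. gallager_alpha r (q!j) (sa!j) (sb!j) (yb!j) (xb!j))" .
  have "(\<Sum>s\<in>words n. \<Sum>x\<in>words n. enc_word_a n q s x * likelihood n sb yb xb s x)
      = (\<Sum>s\<in>words n. \<Sum>x\<in>words n. \<Prod>j<n. Va (q!j) (s!j) (x!j) * Ps (s!j) (sb!j) * Wb (x!j) (xb!j) (yb!j))"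
    by (intro sum.cong refl) (simp add: enc_word_a_def likelihood_def src_word_prob_def chan_word_prob_def prod.distrib)
  also have "\<dots> = (\<Prod>j<n. out_law (q!j) (sb!j) (yb!j) (xb!j))"
    unfolding out_law_def
    by (rule sum_words_prod2[of "\<lambda>j a x. Va (q!j) a x * Ps a (sb!j) * Wb x (xb!j) (yb!j)"])
  finally have b: "(\<Sum>s\<in>words n. \<Sum>x\<in>words n. enc_word_a n q s x * likelihood n sb yb xb s x) = (\<Prod>j<n. out_law (q!j) (sb!j) (yb!j) (xb!j))" .
  show ?thesis unfolding gallager_word_bound_def a b by (simp add: prod_powr_distrib prod.distrib)
qed

lemma gallager_word_bound_average:
  "(\<Sum>q\<in>words n. tq_word_prob n q * (\<Sum>sa\<in>words n. \<Sum>sb\<in>words n. \<Sum>yb\<in>words n. \<Sum>xb\<in>words n. enc_word_b n q sb xb * gallager_word_bound n r q sa sb yb xb))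
   = gallager_base r ^ n"
proof -
  define \<psi> where "\<psi> q = (\<Sum>a\<in>UNIV. \<Sum>b\<in>UNIV. \<Sum>y\<in>UNIV. \<Sum>xb\<in>UNIV.
     Vb q b xb * (gallager_alpha r q a b y xb * out_law q b y xb powr r))" for q
  have inner: "(\<Sum>sa\<in>words n. \<Sum>sb\<in>words n. \<Sum>yb\<in>words n. \<Sum>xb\<in>words n. enc_word_b n q sb xb * gallager_word_bound n r q sa sb yb xb)
      = (\<Prod>j<n. \<psi> (q!j))" for q
  proof -
    have "(\<Sum>sa\<in>words n. \<Sum>sb\<in>words n. \<Sum>yb\<in>words n. \<Sum>xb\<in>words n. enc_word_b n q sb xb * gallager_word_bound n r q sa sb yb xb)
      = (\<Sum>sa\<in>words n. \<Sum>sb\<in>words n. \<Sum>yb\<in>words n. \<Sum>xb\<in>words n. \<Prod>j<n. Vb (q!j) (sb!j) (xb!j) *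
          (gallager_alpha r (q!j) (sa!j) (sb!j) (yb!j) (xb!j) * out_law (q!j) (sb!j) (yb!j) (xb!j) powr r))"
      by (intro sum.cong refl) (simp add: gallager_word_bound_factor enc_word_b_def prod.distrib)
    also have "\<dots> = (\<Prod>j<n. \<psi> (q!j))" unfolding \<psi>_def
      by (rule sum_words_prod4[of "\<lambda>j a b y x. Vb (q!j) b x * (gallager_alpha r (q!j) a b y x * out_law (q!j) b y x powr r)"])
    finally show ?thesis .
  qed
  have "(\<Sum>q\<in>words n. tq_word_prob n q * (\<Sum>sa\<in>words n. \<Sum>sb\<in>words n. \<Sum>yb\<in>words n. \<Sum>xb\<in>words n. enc_word_b n q sb xb * gallager_word_bound n r q sa sb yb xb))
      = (\<Sum>q\<in>words n. \<Prod>j<n. pQ (q!j) * \<psi> (q!j))"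
    by (intro sum.cong refl) (simp add: inner tq_word_prob_def prod.distrib)
  also have "\<dots> = (\<Prod>j<n. \<Sum>q\<in>UNIV. pQ q * \<psi> q)"
    by (rule sum_words_prod[of "\<lambda>j q. pQ q * \<psi> q"])
  also have "\<dots> = gallager_base r ^ n" by (simp add: gallager_base_def \<psi>_def)
  finally show ?thesis .
qed

lemma ensemble_error_bound:
  assumes r: "0 < r" "r < 1"
  shows "ensemble_error n \<le> gallager_base r ^ n"
proof -
  have "ensemble_error n \<le> (\<Sum>q\<in>words n. tq_word_prob n q * (\<Sum>sa\<in>words n. \<Sum>sb\<in>words n. \<Sum>yb\<in>words n. \<Sum>xb\<in>words n. enc_word_b n q sb xb * gallager_word_bound n r q sa sb yb xb))"
    unfolding ensemble_error_def ensemble_avg_def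
    by (intro sum_mono mult_left_mono ensemble_bound_fixed_tq r) (auto simp: tq_word_prob_nonneg)
  also have "\<dots> = gallager_base r ^ n" by (rule gallager_word_bound_average)
  finally show ?thesis .
qed

text \<open>Rewriting x powr (1-r) * y powr r as x * exp (r * ln (y/x)), to differentiate in r.\<close>
lemma powr_as_exp:
  fixes p m \<beta> r :: real
  assumes "0 \<le> p" "0 \<le> m" "r < 1" "p * m > 0 \<Longrightarrow> \<beta> > 0"
  shows "p * (m powr (1-r) * \<beta> powr r) = (if p * m > 0 then p * m * exp (r * (ln \<beta> - ln m)) else 0)"
proof (cases "p * m > 0")
  case True
  then have pm: "p > 0" "m > 0" using assms by (auto simp: zero_less_mult_iff)
  have b: "\<beta> > 0" using assms True by auto
  have "m powr (1-r) * \<beta> powr r = exp ((1-r) * ln m) * exp (r * ln \<beta>)"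
    using pm b by (simp add: powr_def)
  also have "\<dots> = m * exp (r * (ln \<beta> - ln m))"
    using pm by (simp add: exp_add[symmetric] algebra_simps exp_diff)
  finally show ?thesis using True by simp
next
  case False
  then have "p = 0 \<or> m = 0" using assms by (auto simp: zero_less_mult_iff less_le)
  then show ?thesis using False assms by auto
qed

text \<open>Write gallager_base as a mixture of exponentials; its derivative at r = 0 is the average
  log-likelihood ratio info_margin, which later is identified with H - I.\<close>
definition "joint_weight q a b y xb xa = (pQ q * Vb q b xb * Va q a xa) * (Ps a b * Wb xa xb y)"

definition "neg_info_density q a b y xb xa = ln (out_law q b y xb) - ln (Ps a b * Wb xa xb y)"

definition "gallager_base_exp r = (\<Sum>q\<in>UNIV. \<Sum>a\<in>UNIV. \<Sum>b\<in>UNIV. \<Sum>y\<in>UNIV. \<Sum>xb\<in>UNIV. \<Sum>xa\<in>UNIV.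
   joint_weight q a b y xb xa * exp (r * neg_info_density q a b y xb xa))"

definition "info_margin = (\<Sum>q\<in>UNIV. \<Sum>a\<in>UNIV. \<Sum>b\<in>UNIV. \<Sum>y\<in>UNIV. \<Sum>xb\<in>UNIV. \<Sum>xa\<in>UNIV.
   joint_weight q a b y xb xa * neg_info_density q a b y xb xa)"

lemma joint_weight_nonneg: "0 \<le> joint_weight q a b y xb xa" unfolding joint_weight_def by (simp add: pQ_nonneg Vb_nonneg Va_nonneg Ps_nonneg Wb_nonneg)

lemma gallager_base_exp_form:
  assumes r: "r < 1"
  shows "gallager_base r = gallager_base_exp r"
proof -
  have "gallager_base r = (\<Sum>q\<in>UNIV. \<Sum>a\<in>UNIV. \<Sum>b\<in>UNIV. \<Sum>y\<in>UNIV. \<Sum>xb\<in>UNIV. \<Sum>xa\<in>UNIV.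
     (pQ q * Vb q b xb * Va q a xa) * ((Ps a b * Wb xa xb y) powr (1-r) * out_law q b y xb powr r))"
    unfolding gallager_base_def gallager_alpha_def by (simp add: sum_distrib_left sum_distrib_right mult_ac)
  also have "\<dots> = gallager_base_exp r" unfolding gallager_base_exp_def
  proof (intro sum.cong refl)
    fix q a b y xb xa
    have bb: "out_law q b y xb \<ge> Va q a xa * Ps a b * Wb xa xb y"
      unfolding out_law_def
      by (rule order_trans[OF _ member_le_sum[of a]], rule member_le_sum[of xa])
         (auto intro!: sum_nonneg mult_nonneg_nonneg simp: Va_nonneg Ps_nonneg Wb_nonneg)
    have "(pQ q * Vb q b xb * Va q a xa) * ((Ps a b * Wb xa xb y) powr (1-r) * out_law q b y xb powr r)
       = (if (pQ q * Vb q b xb * Va q a xa) * (Ps a b * Wb xa xb y) > 0 then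
          (pQ q * Vb q b xb * Va q a xa) * (Ps a b * Wb xa xb y) * exp (r * (ln (out_law q b y xb) - ln (Ps a b * Wb xa xb y))) else 0)"
    proof (rule powr_as_exp)
      assume "(pQ q * Vb q b xb * Va q a xa) * (Ps a b * Wb xa xb y) > 0"
      then have nz: "Va q a xa \<noteq> 0" "Ps a b \<noteq> 0" "Wb xa xb y \<noteq> 0" by auto
      have "Va q a xa > 0" "Ps a b > 0" "Wb xa xb y > 0"
        using nz Va_nonneg[of q a xa] Ps_nonneg[of a b] Wb_nonneg[of xa xb y] by (auto simp: less_le)
      then have "Va q a xa * Ps a b * Wb xa xb y > 0" by simp
      then show "out_law q b y xb > 0" using bb by linarith
    qed (use r in \<open>auto simp: pQ_nonneg Vb_nonneg Va_nonneg Ps_nonneg Wb_nonneg\<close>)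
    then show "(pQ q * Vb q b xb * Va q a xa) * ((Ps a b * Wb xa xb y) powr (1-r) * out_law q b y xb powr r)
       = joint_weight q a b y xb xa * exp (r * neg_info_density q a b y xb xa)"
      using joint_weight_nonneg[of q a b y xb xa] by (auto simp: joint_weight_def neg_info_density_def)
  qed
  finally show ?thesis .
qed

lemma gallager_base_exp_deriv: "DERIV gallager_base_exp 0 :> info_margin"
proof -
  have e: "gallager_base_exp = (\<lambda>r. \<Sum>q\<in>UNIV. \<Sum>a\<in>UNIV. \<Sum>b\<in>UNIV. \<Sum>y\<in>UNIV. \<Sum>xb\<in>UNIV. \<Sum>xa\<in>UNIV.
   joint_weight q a b y xb xa * exp (r * neg_info_density q a b y xb xa))"
    by (rule ext) (simp add: gallager_base_exp_def)
  show ?thesis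
    unfolding e info_margin_def by (intro derivative_eq_intros sum.cong refl) auto
qed

lemma joint_weight_total:
  assumes Ps_total: "(\<Sum>a\<in>UNIV. \<Sum>b\<in>UNIV. Ps a b) = 1" and Wb_total: "\<And>xa xb. (\<Sum>y\<in>UNIV. Wb xa xb y) = 1"
  shows "(\<Sum>q\<in>UNIV. \<Sum>a\<in>UNIV. \<Sum>b\<in>UNIV. \<Sum>y\<in>UNIV. \<Sum>xb\<in>UNIV. \<Sum>xa\<in>UNIV. joint_weight q a b y xb xa) = 1"
proof -
  have s1: "(\<Sum>y\<in>UNIV. \<Sum>xb\<in>UNIV. \<Sum>xa\<in>UNIV. joint_weight q a b y xb xa) = pQ q * Ps a b" for q a b
  proof -
    have "(\<Sum>y\<in>UNIV. \<Sum>xb\<in>UNIV. \<Sum>xa\<in>UNIV. joint_weight q a b y xb xa) = (\<Sum>xb\<in>UNIV. \<Sum>y\<in>UNIV. \<Sum>xa\<in>UNIV. joint_weight q a b y xb xa)"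
      by (rule sum.swap)
    also have "\<dots> = (\<Sum>xb\<in>UNIV. \<Sum>xa\<in>UNIV. \<Sum>y\<in>UNIV. joint_weight q a b y xb xa)"
      by (rule sum.cong[OF refl], rule sum.swap)
    also have "\<dots> = (\<Sum>xb\<in>UNIV. \<Sum>xa\<in>UNIV. (pQ q * Vb q b xb * Va q a xa) * Ps a b)"
      unfolding joint_weight_def by (simp add: mult.assoc sum_distrib_left[symmetric] Wb_total)
    also have "\<dots> = pQ q * Ps a b"
      using Va Vb by (simp add: is_pmf_def sum_distrib_left[symmetric] sum_distrib_right[symmetric] mult_ac)
    finally show ?thesis .
  qed
  have "(\<Sum>q\<in>UNIV. \<Sum>a\<in>UNIV. \<Sum>b\<in>UNIV. \<Sum>y\<in>UNIV. \<Sum>xb\<in>UNIV. \<Sum>xa\<in>UNIV. joint_weight q a b y xb xa)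
      = (\<Sum>q\<in>UNIV. \<Sum>a\<in>UNIV. \<Sum>b\<in>UNIV. pQ q * Ps a b)" by (simp add: s1)
  also have "\<dots> = 1" using pQ Ps_total by (simp add: is_pmf_def sum_distrib_left[symmetric])
  finally show ?thesis .
qed

lemma gallager_base_below_one:
  assumes Ps_total: "(\<Sum>a\<in>UNIV. \<Sum>b\<in>UNIV. Ps a b) = 1" and Wb_total: "\<And>xa xb. (\<Sum>y\<in>UNIV. Wb xa xb y) = 1"
    and margin: "info_margin < 0"
  obtains r where "0 < r" "r < 1" "gallager_base r < 1"
proof -
  obtain d where d: "d > 0" "\<forall>h>0. h < d \<longrightarrow> gallager_base_exp 0 > gallager_base_exp (0 + h)"
    using DERIV_neg_dec_right[OF gallager_base_exp_deriv margin] by blast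
  define r where "r = min (d/2) (1/2)"
  have r: "0 < r" "r < 1" "r < d" using d by (auto simp: r_def)
  have "gallager_base r = gallager_base_exp r" using r by (intro gallager_base_exp_form) auto
  also have "\<dots> < gallager_base_exp 0" using d r by auto
  also have "gallager_base_exp 0 = 1" using joint_weight_total[OF Ps_total Wb_total] by (simp add: gallager_base_exp_def)
  finally show ?thesis using r that by blast
qed

lemma gallager_base_nonneg: "0 \<le> gallager_base r"
  unfolding gallager_base_def gallager_alpha_def out_law_def
  by (intro sum_nonneg mult_nonneg_nonneg) (auto simp: pQ_nonneg Vb_nonneg Va_nonneg Ps_nonneg Wb_nonneg)

end

section \<open>Information quantities of the joint law\<close>

lemma prv_reindex:
  fixes J :: "'w::finite \<Rightarrow> real" and emb :: "'t::finite \<Rightarrow> 'w"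
  assumes inj: "inj emb" and r: "\<And>w. f w = v \<longleftrightarrow> w \<in> range emb"
  shows "prv J f v = (\<Sum>t\<in>UNIV. J (emb t))"
proof -
  have "{w. f w = v} = range emb" using r by auto
  then show ?thesis unfolding prv_def using sum.reindex[OF inj, of J] by simp
qed

lemma prv_bij:
  assumes b: "bij \<sigma>"
  shows "prv (\<lambda>t. J (\<sigma> t)) (\<lambda>t. f (\<sigma> t)) v = prv J f v"
proof -
  have i: "inj \<sigma>" using b by (simp add: bij_def)
  have "\<sigma> ` {t. f (\<sigma> t) = v} = {w. f w = v}"
  proof (rule set_eqI)
    fix w
    have sw: "\<sigma> (inv \<sigma> w) = w" by (rule surj_f_inv_f[OF bij_is_surj[OF b]])
    show "w \<in> \<sigma> ` {t. f (\<sigma> t) = v} \<longleftrightarrow> w \<in> {w. f w = v}"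
    proof
      assume "w \<in> {w. f w = v}"
      then show "w \<in> \<sigma> ` {t. f (\<sigma> t) = v}" using sw by (intro image_eqI[where x="inv \<sigma> w"]) auto
    qed auto
  qed
  then have "prv J f v = sum J (\<sigma> ` {t. f (\<sigma> t) = v})" unfolding prv_def by simp
  also have "\<dots> = (\<Sum>t\<in>{t. f (\<sigma> t) = v}. J (\<sigma> t))"
  proof -
    have "inj_on \<sigma> {t. f (\<sigma> t) = v}" using i by (simp add: inj_on_def inj_def)
    from sum.reindex[OF this, of J] show ?thesis by (simp add: o_def)
  qed
  finally show ?thesis unfolding prv_def by simp
qed

lemma sum_bij_UNIV:
  fixes g :: "'w::finite \<Rightarrow> real"
  assumes "bij \<sigma>" shows "(\<Sum>t\<in>UNIV. g (\<sigma> t)) = (\<Sum>w\<in>UNIV. g w)"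
  using sum.reindex_bij_betw[of \<sigma> UNIV UNIV g] assms by (simp add: bij_def bij_betw_def)

lemma ce_bij:
  assumes b: "bij \<sigma>"
  shows "cond_entropy (\<lambda>t. J (\<sigma> t)) (\<lambda>t. A (\<sigma> t)) (\<lambda>t. B (\<sigma> t)) = cond_entropy J A B"
  unfolding cond_entropy_def
  using prv_bij[OF b, of J "\<lambda>u. (A u, B u)"] prv_bij[OF b, of J B]
    sum_bij_UNIV[OF b, of "\<lambda>w. J w * log 2 (prv J (\<lambda>u. (A u, B u)) (A w, B w) / prv J B (B w))"]
  by simp

lemma cmi_bij:
  assumes b: "bij \<sigma>"
  shows "cond_mutual_info (\<lambda>t. J (\<sigma> t)) (\<lambda>t. A (\<sigma> t)) (\<lambda>t. B (\<sigma> t)) (\<lambda>t. C (\<sigma> t)) = cond_mutual_info J A B C"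
  unfolding cond_mutual_info_def
  using prv_bij[OF b, of J "\<lambda>u. (A u, B u, C u)"] prv_bij[OF b, of J C]
    prv_bij[OF b, of J "\<lambda>u. (A u, C u)"] prv_bij[OF b, of J "\<lambda>u. (B u, C u)"]
    sum_bij_UNIV[OF b, of "\<lambda>w. J w * log 2
        ((prv J (\<lambda>u. (A u, B u, C u)) (A w, B w, C w) * prv J C (C w)) /
         (prv J (\<lambda>u. (A u, C u)) (A w, C w) * prv J (\<lambda>u. (B u, C u)) (B w, C w)))"]
  by simp

locale coding_setup =
  fixes pQ :: "'q::finite \<Rightarrow> real" and P :: "'s1::finite \<times> 's2::finite \<Rightarrow> real"
    and V1 :: "'q \<Rightarrow> 's1 \<Rightarrow> 'x1::finite \<Rightarrow> real" and V2 :: "'q \<Rightarrow> 's2 \<Rightarrow> 'x2::finite \<Rightarrow> real"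
    and W :: "'x1 \<Rightarrow> 'x2 \<Rightarrow> ('y1::finite \<times> 'y2::finite) \<Rightarrow> real"
  assumes pQ: "is_pmf pQ" and P: "is_pmf P" and V1: "\<And>q a. is_pmf (V1 q a)" and V2: "\<And>q b. is_pmf (V2 q b)"
    and W: "\<And>x1 x2. is_pmf (W x1 x2)"
begin

definition "J = joint_dist pQ P V1 V2 W"

definition "W_to2 x1 x2 y2 = (\<Sum>y1\<in>UNIV. W x1 x2 (y1, y2))"

definition "P_marg2 b = (\<Sum>a\<in>UNIV. P (a, b))"

definition "K2 q b x1 = (\<Sum>a\<in>UNIV. P (a, b) * V1 q a x1)"

definition "out_law2 q b y x2 = (\<Sum>a\<in>UNIV. \<Sum>x\<in>UNIV. V1 q a x * P (a, b) * W_to2 x x2 y)"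

lemma pQ_nonneg: "0 \<le> pQ q" using pQ by (auto simp: is_pmf_def)

lemma P_nonneg: "0 \<le> P s" using P unfolding is_pmf_def by blast

lemma V1_nonneg: "0 \<le> V1 q a x" using V1 by (auto simp: is_pmf_def)

lemma V2_nonneg: "0 \<le> V2 q a x" using V2 by (auto simp: is_pmf_def)

lemma W_nonneg: "0 \<le> W x1 x2 y" using W[of x1 x2] unfolding is_pmf_def by blast

lemma V1_total: "(\<Sum>x\<in>UNIV. V1 q a x) = 1" using V1 by (auto simp: is_pmf_def)

lemma V2_total: "(\<Sum>x\<in>UNIV. V2 q a x) = 1" using V2 by (auto simp: is_pmf_def)

lemma pQ_total: "(\<Sum>x\<in>UNIV. pQ x) = 1" using pQ by (auto simp: is_pmf_def)

lemma W_total: "(\<Sum>y1\<in>UNIV. \<Sum>y2\<in>UNIV. W x1 x2 (y1, y2)) = 1" using W[of x1 x2] by (auto simp: is_pmf_def sum_UNIV_pair)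

lemma P_total: "(\<Sum>a\<in>UNIV. \<Sum>b\<in>UNIV. P (a, b)) = 1" using P by (auto simp: is_pmf_def sum_UNIV_pair)

lemma W_to2_nonneg: "0 \<le> W_to2 x y z" unfolding W_to2_def by (intro sum_nonneg) (auto simp: W_nonneg)

lemma W_to2_total: "(\<Sum>y\<in>UNIV. W_to2 x1 x2 y) = 1"
  unfolding W_to2_def using W_total[of x1 x2] by (subst sum.swap) simp

abbreviation "cS1 \<equiv> (\<lambda>(q::'q,s1::'s1,s2::'s2,x1::'x1,x2::'x2,y1::'y1,y2::'y2). s1)"

abbreviation "cS2 \<equiv> (\<lambda>(q::'q,s1::'s1,s2::'s2,x1::'x1,x2::'x2,y1::'y1,y2::'y2). s2)"

abbreviation "cX1 \<equiv> (\<lambda>(q::'q,s1::'s1,s2::'s2,x1::'x1,x2::'x2,y1::'y1,y2::'y2). x1)"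

abbreviation "cY2 \<equiv> (\<lambda>(q::'q,s1::'s1,s2::'s2,x1::'x1,x2::'x2,y1::'y1,y2::'y2). y2)"

abbreviation "cC \<equiv> (\<lambda>(q::'q,s1::'s1,s2::'s2,x1::'x1,x2::'x2,y1::'y1,y2::'y2). (x2, s2, q))"

lemma prv_sources: "prv J (\<lambda>u. (cS1 u, cS2 u)) (a, b) = P (a, b)"
proof -
  have "prv J (\<lambda>u. (cS1 u, cS2 u)) (a, b)
     = (\<Sum>t\<in>UNIV. J ((\<lambda>(q,x1,x2,y1,y2). (q,a,b,x1,x2,y1,y2)) t))"
    by (rule prv_reindex) (auto simp: inj_on_def image_def)
  also have "\<dots> = P (a, b)"
    by (simp add: sum_UNIV_pair J_def joint_dist_def sum_distrib_left[symmetric] sum_distrib_right[symmetric] W_total V1_total V2_total pQ_total)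
  finally show ?thesis .
qed

lemma prv_source2: "prv J cS2 b = P_marg2 b"
proof -
  have "prv J cS2 b = (\<Sum>t\<in>UNIV. J ((\<lambda>(q,s1,x1,x2,y1,y2). (q,s1,b,x1,x2,y1,y2)) t))"
    by (rule prv_reindex) (auto simp: inj_on_def image_def)
  also have "\<dots> = P_marg2 b"
    by (simp add: sum_UNIV_pair J_def joint_dist_def sum_distrib_left[symmetric] sum_distrib_right[symmetric] W_total V1_total V2_total pQ_total P_marg2_def)
  finally show ?thesis .
qed

lemma prv_num: "prv J (\<lambda>u. (cX1 u, cY2 u, cC u)) (x1, y2, (x2, b, q)) = pQ q * V2 q b x2 * K2 q b x1 * W_to2 x1 x2 y2"
proof -
  have "prv J (\<lambda>u. (cX1 u, cY2 u, cC u)) (x1, y2, (x2, b, q)) = (\<Sum>t\<in>UNIV. J ((\<lambda>(s1,y1). (q,s1,b,x1,x2,y1,y2)) t))"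
    by (rule prv_reindex) (auto simp: inj_on_def image_def)
  also have "\<dots> = pQ q * V2 q b x2 * K2 q b x1 * W_to2 x1 x2 y2"
    by (simp add: sum_UNIV_pair J_def joint_dist_def K2_def W_to2_def sum_distrib_left sum_distrib_right mult_ac)
  finally show ?thesis .
qed

lemma prv_cond: "prv J cC (x2, b, q) = pQ q * V2 q b x2 * P_marg2 b"
proof -
  have "prv J cC (x2, b, q) = (\<Sum>t\<in>UNIV. J ((\<lambda>(s1,x1,y1,y2). (q,s1,b,x1,x2,y1,y2)) t))"
    by (rule prv_reindex) (auto simp: inj_on_def image_def)
  also have "\<dots> = pQ q * V2 q b x2 * P_marg2 b"
    by (simp add: sum_UNIV_pair J_def joint_dist_def sum_distrib_left[symmetric] sum_distrib_right[symmetric] W_total V1_total P_marg2_def mult_ac)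
  finally show ?thesis .
qed

lemma prv_den1: "prv J (\<lambda>u. (cX1 u, cC u)) (x1, (x2, b, q)) = pQ q * V2 q b x2 * K2 q b x1"
proof -
  have "prv J (\<lambda>u. (cX1 u, cC u)) (x1, (x2, b, q)) = (\<Sum>t\<in>UNIV. J ((\<lambda>(s1,y1,y2). (q,s1,b,x1,x2,y1,y2)) t))"
    by (rule prv_reindex) (auto simp: inj_on_def image_def)
  also have "\<dots> = pQ q * V2 q b x2 * K2 q b x1"
    by (simp add: sum_UNIV_pair J_def joint_dist_def sum_distrib_left[symmetric] sum_distrib_right[symmetric] W_total K2_def mult_ac,
        simp add: sum_distrib_left mult_ac)
  finally show ?thesis .
qed

lemma prv_den2: "prv J (\<lambda>u. (cY2 u, cC u)) (y2, (x2, b, q)) = pQ q * V2 q b x2 * out_law2 q b y2 x2"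
proof -
  have "prv J (\<lambda>u. (cY2 u, cC u)) (y2, (x2, b, q)) = (\<Sum>t\<in>UNIV. J ((\<lambda>(s1,x1,y1). (q,s1,b,x1,x2,y1,y2)) t))"
    by (rule prv_reindex) (auto simp: inj_on_def image_def)
  also have "\<dots> = pQ q * V2 q b x2 * out_law2 q b y2 x2"
    by (simp add: sum_UNIV_pair J_def joint_dist_def out_law2_def W_to2_def sum_distrib_left sum_distrib_right mult_ac)
  finally show ?thesis .
qed

lemma support_positive:
  assumes "J (q,a,b,x1,x2,y1,y2) \<noteq> 0"
  shows "pQ q > 0" "P (a,b) > 0" "V1 q a x1 > 0" "V2 q b x2 > 0" "W x1 x2 (y1,y2) > 0"
    "W_to2 x1 x2 y2 > 0" "K2 q b x1 > 0" "P_marg2 b > 0" "out_law2 q b y2 x2 > 0"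
proof -
  have nz: "pQ q \<noteq> 0" "P (a,b) \<noteq> 0" "V1 q a x1 \<noteq> 0" "V2 q b x2 \<noteq> 0" "W x1 x2 (y1,y2) \<noteq> 0"
    using assms by (auto simp: J_def joint_dist_def)
  show 1: "pQ q > 0" "P (a,b) > 0" "V1 q a x1 > 0" "V2 q b x2 > 0" "W x1 x2 (y1,y2) > 0"
    using nz pQ_nonneg[of q] P_nonneg[of "(a,b)"] V1_nonneg[of q a x1] V2_nonneg[of q b x2] W_nonneg[of x1 x2 "(y1,y2)"] by auto
  have "W x1 x2 (y1,y2) \<le> W_to2 x1 x2 y2" unfolding W_to2_def
    by (rule member_le_sum[of y1]) (auto simp: W_nonneg)
  then show 2: "W_to2 x1 x2 y2 > 0" using 1 by linarith
  have "P (a,b) * V1 q a x1 \<le> K2 q b x1" unfolding K2_def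
    by (rule member_le_sum[of a]) (auto simp: P_nonneg V1_nonneg)
  moreover have "P (a,b) * V1 q a x1 > 0" using 1 by simp
  ultimately show "K2 q b x1 > 0" by linarith
  have "P (a,b) \<le> P_marg2 b" unfolding P_marg2_def
    by (rule member_le_sum[of a]) (auto simp: P_nonneg)
  then show "P_marg2 b > 0" using 1 by linarith
  have "V1 q a x1 * P (a, b) * W_to2 x1 x2 y2 \<le> out_law2 q b y2 x2" unfolding out_law2_def
    by (rule order_trans[OF _ member_le_sum[of a]], rule member_le_sum[of x1])
       (auto intro!: sum_nonneg mult_nonneg_nonneg simp: V1_nonneg P_nonneg W_to2_nonneg)
  moreover have "V1 q a x1 * P (a, b) * W_to2 x1 x2 y2 > 0" using 1 2 by simp
  ultimately show "out_law2 q b y2 x2 > 0" by linarith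
qed

lemma margin_pointwise:
  "ln 2 * (cond_entropy J cS1 cS2 - cond_mutual_info J cX1 cY2 cC)
   = (\<Sum>w\<in>UNIV. J w * (case w of (q,a,b,x1,x2,y1,y2) \<Rightarrow> ln (out_law2 q b y2 x2) - ln (P (a,b) * W_to2 x1 x2 y2)))"
proof -
  have pt: "ln 2 * (- (J w * log 2 (prv J (\<lambda>u. (cS1 u, cS2 u)) (cS1 w, cS2 w) / prv J cS2 (cS2 w)))
     - J w * log 2 ((prv J (\<lambda>u. (cX1 u, cY2 u, cC u)) (cX1 w, cY2 w, cC w) * prv J cC (cC w)) /
         (prv J (\<lambda>u. (cX1 u, cC u)) (cX1 w, cC w) * prv J (\<lambda>u. (cY2 u, cC u)) (cY2 w, cC w))))
     = J w * (case w of (q,a,b,x1,x2,y1,y2) \<Rightarrow> ln (out_law2 q b y2 x2) - ln (P (a,b) * W_to2 x1 x2 y2))" for w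
  proof -
    obtain q a b x1 x2 y1 y2 where w: "w = (q,a,b,x1,x2,y1,y2)" using prod_cases7[of w] by metis
    show ?thesis
    proof (cases "J w = 0")
      case True then show ?thesis by simp
    next
      case False
      note pf = support_positive[OF False[unfolded w]]
      have "(pQ q * V2 q b x2 * K2 q b x1 * W_to2 x1 x2 y2 * (pQ q * V2 q b x2 * P_marg2 b)) /
            (pQ q * V2 q b x2 * K2 q b x1 * (pQ q * V2 q b x2 * out_law2 q b y2 x2))
          = W_to2 x1 x2 y2 * P_marg2 b / out_law2 q b y2 x2"
        using pf by (simp add: field_simps)
      then show ?thesis
        using pf unfolding w
        by (simp add: prv_sources prv_source2 prv_num prv_cond prv_den1 prv_den2 log_def ln_mult ln_div algebra_simps,
            simp add: field_simps)
    qed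
  qed
  show ?thesis
    unfolding cond_entropy_def cond_mutual_info_def
    by (simp add: pt[symmetric] sum_distrib_left sum_subtractf sum_negf algebra_simps)
qed

lemma margin_identity:
  "(\<Sum>q\<in>UNIV. \<Sum>a\<in>UNIV. \<Sum>b\<in>UNIV. \<Sum>y\<in>UNIV. \<Sum>xb\<in>UNIV. \<Sum>xa\<in>UNIV.
     (pQ q * V2 q b xb * V1 q a xa) * (P (a,b) * W_to2 xa xb y) * (ln (out_law2 q b y xb) - ln (P (a,b) * W_to2 xa xb y)))
   = ln 2 * (cond_entropy J cS1 cS2 - cond_mutual_info J cX1 cY2 cC)"
proof -
  define \<phi> where "\<phi> q a b xa xb y = ln (out_law2 q b y xb) - ln (P (a,b) * W_to2 xa xb y)" for q a b xa xb y
  define G where "G q a b xa xb y = (pQ q * V2 q b xb * V1 q a xa) * (P (a,b) * W_to2 xa xb y) * \<phi> q a b xa xb y" for q a b xa xb y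
  have s1: "(\<Sum>y1\<in>UNIV. \<Sum>y2\<in>UNIV. J (q,a,b,x1,x2,y1,y2) * \<phi> q a b x1 x2 y2) = (\<Sum>y2\<in>UNIV. G q a b x1 x2 y2)" for q a b x1 x2
  proof -
    have "(\<Sum>y1\<in>UNIV. \<Sum>y2\<in>UNIV. J (q,a,b,x1,x2,y1,y2) * \<phi> q a b x1 x2 y2) = (\<Sum>y2\<in>UNIV. \<Sum>y1\<in>UNIV. J (q,a,b,x1,x2,y1,y2) * \<phi> q a b x1 x2 y2)"
      by (rule sum.swap)
    also have "\<dots> = (\<Sum>y2\<in>UNIV. G q a b x1 x2 y2)"
      by (rule sum.cong[OF refl]) (simp add: G_def J_def joint_dist_def W_to2_def sum_distrib_left sum_distrib_right mult_ac)
    finally show ?thesis .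
  qed
  have s2: "(\<Sum>x1\<in>UNIV. \<Sum>x2\<in>UNIV. \<Sum>y2\<in>UNIV. G q a b x1 x2 y2) = (\<Sum>y2\<in>UNIV. \<Sum>x2\<in>UNIV. \<Sum>x1\<in>UNIV. G q a b x1 x2 y2)" for q a b
  proof -
    have "(\<Sum>x1\<in>UNIV. \<Sum>x2\<in>UNIV. \<Sum>y2\<in>UNIV. G q a b x1 x2 y2) = (\<Sum>x2\<in>UNIV. \<Sum>x1\<in>UNIV. \<Sum>y2\<in>UNIV. G q a b x1 x2 y2)"
      by (rule sum.swap)
    also have "\<dots> = (\<Sum>x2\<in>UNIV. \<Sum>y2\<in>UNIV. \<Sum>x1\<in>UNIV. G q a b x1 x2 y2)"
      by (rule sum.cong[OF refl], rule sum.swap)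
    also have "\<dots> = (\<Sum>y2\<in>UNIV. \<Sum>x2\<in>UNIV. \<Sum>x1\<in>UNIV. G q a b x1 x2 y2)"
      by (rule sum.swap)
    finally show ?thesis .
  qed
  have "ln 2 * (cond_entropy J cS1 cS2 - cond_mutual_info J cX1 cY2 cC)
      = (\<Sum>q\<in>UNIV. \<Sum>a\<in>UNIV. \<Sum>b\<in>UNIV. \<Sum>x1\<in>UNIV. \<Sum>x2\<in>UNIV. \<Sum>y1\<in>UNIV. \<Sum>y2\<in>UNIV.
           J (q,a,b,x1,x2,y1,y2) * \<phi> q a b x1 x2 y2)"
    unfolding margin_pointwise by (simp add: sum_UNIV_pair \<phi>_def)
  also have "\<dots> = (\<Sum>q\<in>UNIV. \<Sum>a\<in>UNIV. \<Sum>b\<in>UNIV. \<Sum>y\<in>UNIV. \<Sum>xb\<in>UNIV. \<Sum>xa\<in>UNIV. G q a b xa xb y)"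
    by (simp add: s1 s2)
  finally show ?thesis by (simp add: G_def \<phi>_def)
qed

end

section \<open>Random coding over the two-way channel\<close>

text \<open>Both directions at once: the direction 1 -> 2 is the joint law itself, the direction 2 -> 1
  is the same construction with the users' roles swapped.\<close>
locale two_way_setup = s2: coding_setup pQ P V1 V2 W
  for pQ :: "'q::finite \<Rightarrow> real" and P :: "'s1::finite \<times> 's2::finite \<Rightarrow> real"
    and V1 :: "'q \<Rightarrow> 's1 \<Rightarrow> 'x1::finite \<Rightarrow> real" and V2 :: "'q \<Rightarrow> 's2 \<Rightarrow> 'x2::finite \<Rightarrow> real"
    and W :: "'x1 \<Rightarrow> 'x2 \<Rightarrow> ('y1::finite \<times> 'y2::finite) \<Rightarrow> real"
begin

text \<open>With sources and channel outputs swapped the data again form a coding setup, which serves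
  for decoding at user 1. Prefixes: s2/d2 decode at user 2 (direction 1 -> 2), s1/d1 at user 1.\<close>
lemma swapped_source_pmf: "is_pmf (\<lambda>p. P (snd p, fst p))"
proof -
  have "(\<Sum>p\<in>UNIV. P (snd p, fst p)) = (\<Sum>b\<in>UNIV. \<Sum>a\<in>UNIV. P (a, b))" by (simp add: sum_UNIV_pair)
  also have "\<dots> = 1" using s2.P_total by (subst sum.swap) simp
  finally show ?thesis using s2.P_nonneg by (simp add: is_pmf_def)
qed

lemma swapped_channel_pmf: "is_pmf (\<lambda>p. W x1 x2 (snd p, fst p))"
proof -
  have "(\<Sum>p\<in>UNIV. W x1 x2 (snd p, fst p)) = (\<Sum>b\<in>UNIV. \<Sum>a\<in>UNIV. W x1 x2 (a, b))" by (simp add: sum_UNIV_pair)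
  also have "\<dots> = 1" using s2.W_total by (subst sum.swap) simp
  finally show ?thesis using s2.W_nonneg by (simp add: is_pmf_def)
qed

sublocale s1: coding_setup pQ "\<lambda>p. P (snd p, fst p)" V2 V1 "\<lambda>x2 x1 p. W x1 x2 (snd p, fst p)"
  using s2.pQ s2.V1 s2.V2 swapped_source_pmf swapped_channel_pmf by unfold_locales auto

sublocale d2: one_way_link pQ "\<lambda>a b. P (a, b)" V1 V2 s2.W_to2
  using s2.pQ s2.V1 s2.V2 s2.P_nonneg s2.W_to2_nonneg by unfold_locales auto

sublocale d1: one_way_link pQ "\<lambda>a b. P (b, a)" V2 V1 s1.W_to2
  using s2.pQ s2.V1 s2.V2 s2.P_nonneg s1.W_to2_nonneg by unfold_locales auto

lemma info_margin_user2:
  "d2.info_margin = ln 2 * (cond_entropy s2.J s2.cS1 s2.cS2 - cond_mutual_info s2.J s2.cX1 s2.cY2 s2.cC)"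
  unfolding s2.margin_identity[symmetric] d2.info_margin_def d2.joint_weight_def d2.neg_info_density_def
    d2.out_law_def s2.out_law2_def by (rule refl)

definition "swap_users = (\<lambda>(q::'q, u::'s2, v::'s1, x::'x2, x'::'x1, y::'y2, y'::'y1). (q, v, u, x', x, y', y))"

lemma bij_swap_users: "bij swap_users"
proof (rule o_bij)
  let ?g = "\<lambda>(q::'q, v::'s1, u::'s2, x'::'x1, x::'x2, y'::'y1, y::'y2). (q, u, v, x, x', y, y')"
  show "?g \<circ> swap_users = id" by (rule ext) (auto simp: swap_users_def)
  show "swap_users \<circ> ?g = id" by (rule ext) (auto simp: swap_users_def)
qed

lemma joint_law_swap: "s1.J = (\<lambda>t. s2.J (swap_users t))"
  by (rule ext) (auto simp: s1.J_def s2.J_def joint_dist_def swap_users_def mult_ac)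

lemma entropy_swap: "cond_entropy s1.J s1.cS1 s1.cS2 = cond_entropy s2.J s2.cS2 s2.cS1"
proof -
  have src_swap1: "s1.cS1 = (\<lambda>t. s2.cS2 (swap_users t))" by (rule ext) (auto simp: swap_users_def)
  have src_swap2: "s1.cS2 = (\<lambda>t. s2.cS1 (swap_users t))" by (rule ext) (auto simp: swap_users_def)
  have "cond_entropy s1.J s1.cS1 s1.cS2 = cond_entropy (\<lambda>t. s2.J (swap_users t)) (\<lambda>t. s2.cS2 (swap_users t)) (\<lambda>t. s2.cS1 (swap_users t))"
    by (simp only: joint_law_swap src_swap1 src_swap2)
  also have "\<dots> = cond_entropy s2.J s2.cS2 s2.cS1" by (rule ce_bij[OF bij_swap_users])
  finally show ?thesis .
qed

lemma mutual_info_swap: "cond_mutual_info s1.J s1.cX1 s1.cY2 s1.cC =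
  cond_mutual_info s2.J (\<lambda>(q,s1,s2,x1,x2,y1,y2). x2) (\<lambda>(q,s1,s2,x1,x2,y1,y2). y1) (\<lambda>(q,s1,s2,x1,x2,y1,y2). (x1, s1, q))"
proof -
  have input_swap: "s1.cX1 = (\<lambda>t. (\<lambda>(q::'q,s1::'s1,s2::'s2,x1::'x1,x2::'x2,y1::'y1,y2::'y2). x2) (swap_users t))" by (rule ext) (auto simp: swap_users_def)
  have output_swap: "s1.cY2 = (\<lambda>t. (\<lambda>(q::'q,s1::'s1,s2::'s2,x1::'x1,x2::'x2,y1::'y1,y2::'y2). y1) (swap_users t))" by (rule ext) (auto simp: swap_users_def)
  have cond_swap: "s1.cC = (\<lambda>t. (\<lambda>(q::'q,s1::'s1,s2::'s2,x1::'x1,x2::'x2,y1::'y1,y2::'y2). (x1, s1, q)) (swap_users t))" by (rule ext) (auto simp: swap_users_def)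
  show ?thesis by (simp only: joint_law_swap input_swap output_swap cond_swap cmi_bij[OF bij_swap_users])
qed

lemma info_margin_user1:
  "d1.info_margin = ln 2 * (cond_entropy s2.J s2.cS2 s2.cS1 -
     cond_mutual_info s2.J (\<lambda>(q,s1,s2,x1,x2,y1,y2). x2) (\<lambda>(q,s1,s2,x1,x2,y1,y2). y1)
       (\<lambda>(q,s1,s2,x1,x2,y1,y2). (x1, s1, q)))"
proof -
  have "d1.info_margin = ln 2 * (cond_entropy s1.J s1.cS1 s1.cS2 - cond_mutual_info s1.J s1.cX1 s1.cY2 s1.cC)"
    unfolding s1.margin_identity[symmetric] d1.info_margin_def d1.joint_weight_def d1.neg_info_density_def
      d1.out_law_def s1.out_law2_def by (simp only: fst_conv snd_conv)
  then show ?thesis by (simp only: entropy_swap mutual_info_swap)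
qed

text \<open>The code probability of a two-way transmission, and the union bound: the two-way error is at
  most the sum of the one-way errors, each of which only sees its own output.\<close>
definition "joint_word_prob n c1 c2 s1 s2 y1 y2 =
   (\<Prod>k<n. P (s1 ! k, s2 ! k)) * (\<Prod>j<n. W (c1 s1 ! j) (c2 s2 ! j) (y1 ! j, y2 ! j))"

lemma joint_word_prob_nonneg: "0 \<le> joint_word_prob n c1 c2 s1 s2 y1 y2"
  unfolding joint_word_prob_def by (intro mult_nonneg_nonneg prod_nonneg) (auto simp: s2.P_nonneg s2.W_nonneg)

lemma error_prob_codebooks:
  "error_prob P W n n (\<lambda>j s ys. c1 s ! j) (\<lambda>j s ys. c2 s ! j) g1 g2
   = (\<Sum>s1\<in>words n. \<Sum>s2\<in>words n. \<Sum>y1\<in>words n. \<Sum>y2\<in>words n.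
        joint_word_prob n c1 c2 s1 s2 y1 y2 * (if g2 y2 s2 \<noteq> s1 \<or> g1 y1 s1 \<noteq> s2 then 1 else 0))"
  unfolding error_prob_def words_def joint_word_prob_def by simp

lemma marginal_at_user2:
  "(\<Sum>s1\<in>words n. \<Sum>s2\<in>words n. \<Sum>y1\<in>words n. \<Sum>y2\<in>words n. joint_word_prob n c1 c2 s1 s2 y1 y2 * f s1 s2 y2)
   = (\<Sum>s1\<in>words n. \<Sum>s2\<in>words n. \<Sum>y2\<in>words n. d2.likelihood n s2 y2 (c2 s2) s1 (c1 s1) * f s1 s2 y2)"
proof -
  have y1: "(\<Sum>y1\<in>words n. joint_word_prob n c1 c2 s1 s2 y1 y2) = d2.likelihood n s2 y2 (c2 s2) s1 (c1 s1)"
    for s1 s2 y2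
  proof -
    have "(\<Sum>y1\<in>words n. joint_word_prob n c1 c2 s1 s2 y1 y2)
        = (\<Prod>k<n. P (s1 ! k, s2 ! k)) * (\<Sum>y1\<in>words n. \<Prod>j<n. W (c1 s1 ! j) (c2 s2 ! j) (y1 ! j, y2 ! j))"
      unfolding joint_word_prob_def by (rule sum_distrib_left[symmetric])
    also have "\<dots> = d2.likelihood n s2 y2 (c2 s2) s1 (c1 s1)"
      unfolding sum_words_prod[of "\<lambda>j y. W (c1 s1 ! j) (c2 s2 ! j) (y, y2 ! j)"]
      by (simp add: d2.likelihood_def d2.src_word_prob_def d2.chan_word_prob_def s2.W_to2_def)
    finally show ?thesis .
  qed
  have "(\<Sum>s1\<in>words n. \<Sum>s2\<in>words n. \<Sum>y1\<in>words n. \<Sum>y2\<in>words n. joint_word_prob n c1 c2 s1 s2 y1 y2 * f s1 s2 y2)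
      = (\<Sum>s1\<in>words n. \<Sum>s2\<in>words n. \<Sum>y2\<in>words n. \<Sum>y1\<in>words n. joint_word_prob n c1 c2 s1 s2 y1 y2 * f s1 s2 y2)"
    by (intro sum.cong refl sum.swap)
  also have "\<dots> = (\<Sum>s1\<in>words n. \<Sum>s2\<in>words n. \<Sum>y2\<in>words n. d2.likelihood n s2 y2 (c2 s2) s1 (c1 s1) * f s1 s2 y2)"
    by (simp only: sum_distrib_right[symmetric] y1)
  finally show ?thesis .
qed

lemma marginal_at_user1:
  "(\<Sum>s1\<in>words n. \<Sum>s2\<in>words n. \<Sum>y1\<in>words n. \<Sum>y2\<in>words n. joint_word_prob n c1 c2 s1 s2 y1 y2 * f s1 s2 y1)
   = (\<Sum>s2\<in>words n. \<Sum>s1\<in>words n. \<Sum>y1\<in>words n. d1.likelihood n s1 y1 (c1 s1) s2 (c2 s2) * f s1 s2 y1)"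
proof -
  have y2: "(\<Sum>y2\<in>words n. joint_word_prob n c1 c2 s1 s2 y1 y2) = d1.likelihood n s1 y1 (c1 s1) s2 (c2 s2)"
    for s1 s2 y1
  proof -
    have "(\<Sum>y2\<in>words n. joint_word_prob n c1 c2 s1 s2 y1 y2)
        = (\<Prod>k<n. P (s1 ! k, s2 ! k)) * (\<Sum>y2\<in>words n. \<Prod>j<n. W (c1 s1 ! j) (c2 s2 ! j) (y1 ! j, y2 ! j))"
      unfolding joint_word_prob_def by (rule sum_distrib_left[symmetric])
    also have "\<dots> = d1.likelihood n s1 y1 (c1 s1) s2 (c2 s2)"
      unfolding sum_words_prod[of "\<lambda>j y. W (c1 s1 ! j) (c2 s2 ! j) (y1 ! j, y)"]
      by (simp add: d1.likelihood_def d1.src_word_prob_def d1.chan_word_prob_def s1.W_to2_def)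
    finally show ?thesis .
  qed
  have "(\<Sum>s1\<in>words n. \<Sum>s2\<in>words n. \<Sum>y1\<in>words n. \<Sum>y2\<in>words n. joint_word_prob n c1 c2 s1 s2 y1 y2 * f s1 s2 y1)
      = (\<Sum>s1\<in>words n. \<Sum>s2\<in>words n. \<Sum>y1\<in>words n. d1.likelihood n s1 y1 (c1 s1) s2 (c2 s2) * f s1 s2 y1)"
    by (simp only: sum_distrib_right[symmetric] y2)
  also have "\<dots> = (\<Sum>s2\<in>words n. \<Sum>s1\<in>words n. \<Sum>y1\<in>words n. d1.likelihood n s1 y1 (c1 s1) s2 (c2 s2) * f s1 s2 y1)"
    by (rule sum.swap)
  finally show ?thesis .
qed

lemma error_prob_union_bound:
  "error_prob P W n n (\<lambda>j s ys. c1 s ! j) (\<lambda>j s ys. c2 s ! j)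
     (\<lambda>y1 s1. d1.ml_decode n c2 c1 y1 s1) (\<lambda>y2 s2. d2.ml_decode n c1 c2 y2 s2)
   \<le> d2.decoding_error n c1 c2 + d1.decoding_error n c2 c1"
proof -
  define err2 where "err2 s1 s2 y2 = (if d2.ml_decode n c1 c2 y2 s2 \<noteq> s1 then 1 else (0::real))" for s1 s2 y2
  define err1 where "err1 s1 s2 y1 = (if d1.ml_decode n c2 c1 y1 s1 \<noteq> s2 then 1 else (0::real))" for s1 s2 y1
  have "error_prob P W n n (\<lambda>j s ys. c1 s ! j) (\<lambda>j s ys. c2 s ! j)
          (\<lambda>y1 s1. d1.ml_decode n c2 c1 y1 s1) (\<lambda>y2 s2. d2.ml_decode n c1 c2 y2 s2)
      \<le> (\<Sum>s1\<in>words n. \<Sum>s2\<in>words n. \<Sum>y1\<in>words n. \<Sum>y2\<in>words n.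
          joint_word_prob n c1 c2 s1 s2 y1 y2 * err2 s1 s2 y2 + joint_word_prob n c1 c2 s1 s2 y1 y2 * err1 s1 s2 y1)"
    unfolding error_prob_codebooks distrib_left[symmetric]
    by (intro sum_mono mult_left_mono joint_word_prob_nonneg) (auto simp: err1_def err2_def)
  also have "\<dots> = d2.decoding_error n c1 c2 + d1.decoding_error n c2 c1"
    unfolding sum.distrib marginal_at_user2 marginal_at_user1
    by (simp add: d2.decoding_error_def d1.decoding_error_def err1_def err2_def)
  finally show ?thesis .
qed

text \<open>Both one-way ensembles are the same ensemble of codebook pairs; hence the two-way error of the
  random code is at most the sum of the two Gallager bounds, and a good code exists.\<close>
definition "code_error n c1 c2 = error_prob P W n n (\<lambda>j s ys. c1 s ! j) (\<lambda>j s ys. c2 s ! j)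
   (\<lambda>y1 s1. d1.ml_decode n c2 c1 y1 s1) (\<lambda>y2 s2. d2.ml_decode n c1 c2 y2 s2)"

lemma ensemble_avg_swap: "d2.ensemble_avg n (\<lambda>c1 c2. F c2 c1) = d1.ensemble_avg n F"
proof -
  have a: "d1.codebook_prob_a n q c = d2.codebook_prob_b n q c" for q c
    by (simp add: d1.codebook_prob_a_def d2.codebook_prob_b_def d1.enc_word_a_def d2.enc_word_b_def)
  have b: "d1.codebook_prob_b n q c = d2.codebook_prob_a n q c" for q c
    by (simp add: d1.codebook_prob_b_def d2.codebook_prob_a_def d1.enc_word_b_def d2.enc_word_a_def)
  show ?thesis
    unfolding d1.ensemble_avg_def d2.ensemble_avg_def a b d1.tq_word_prob_def d2.tq_word_prob_def
    by (intro sum.cong refl arg_cong2[where f="(*)"] sum_weighted_swap)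
qed

lemma ensemble_code_error_bound:
  assumes r2: "0 < r2" "r2 < 1" and r1: "0 < r1" "r1 < 1"
  shows "d2.ensemble_avg n (code_error n) \<le> d2.gallager_base r2 ^ n + d1.gallager_base r1 ^ n"
proof -
  have "d2.ensemble_avg n (code_error n)
      \<le> d2.ensemble_avg n (\<lambda>c1 c2. d2.decoding_error n c1 c2 + d1.decoding_error n c2 c1)"
    unfolding code_error_def by (intro d2.ensemble_avg_mono error_prob_union_bound)
  also have "\<dots> = d2.ensemble_error n + d1.ensemble_error n"
    unfolding d2.ensemble_avg_add ensemble_avg_swap d2.ensemble_error_def d1.ensemble_error_def ..
  also have "\<dots> \<le> d2.gallager_base r2 ^ n + d1.gallager_base r1 ^ n"
    by (intro add_mono d2.ensemble_error_bound d1.ensemble_error_bound r2 r1)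
  finally show ?thesis .
qed

lemma achievable_from_codebooks:
  assumes "\<And>\<epsilon>. \<epsilon> > 0 \<Longrightarrow> \<exists>n>0. \<exists>c1 c2. code_error n c1 c2 < \<epsilon>"
  shows "achievable_restricted P W 1"
  unfolding achievable_restricted_def
proof (intro allI impI)
  fix \<epsilon> :: real assume "\<epsilon> > 0"
  then obtain n c1 c2 where "n > 0" "code_error n c1 c2 < \<epsilon>" using assms by blast
  moreover have "restricted_encoder (\<lambda>j s (ys :: 'y1 list). c1 s ! j)"
    and "restricted_encoder (\<lambda>j s (ys :: 'y2 list). c2 s ! j)"
    by (simp_all add: restricted_encoder_def)
  ultimately show "\<exists>m n. 0 < m \<and> 0 < n \<and> real n / real m = 1 \<and>
        (\<exists>(f1 :: nat \<Rightarrow> 's1 list \<Rightarrow> 'y1 list \<Rightarrow> 'x1) (f2 :: nat \<Rightarrow> 's2 list \<Rightarrow> 'y2 list \<Rightarrow> 'x2) g1 g2.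
           restricted_encoder f1 \<and> restricted_encoder f2 \<and> error_prob P W m n f1 f2 g1 g2 < \<epsilon>)"
    unfolding code_error_def by fastforce
qed

lemma achievable_from_margins:
  assumes h2: "cond_entropy s2.J s2.cS1 s2.cS2 < cond_mutual_info s2.J s2.cX1 s2.cY2 s2.cC"
    and h1: "cond_entropy s2.J s2.cS2 s2.cS1 < cond_mutual_info s2.J (\<lambda>(q,s1,s2,x1,x2,y1,y2). x2)
               (\<lambda>(q,s1,s2,x1,x2,y1,y2). y1) (\<lambda>(q,s1,s2,x1,x2,y1,y2). (x1, s1, q))"
  shows "achievable_restricted P W 1"
proof (rule achievable_from_codebooks)
  fix \<epsilon> :: real assume "\<epsilon> > 0"
  have margin2: "d2.info_margin < 0" and margin1: "d1.info_margin < 0"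
    unfolding info_margin_user2 info_margin_user1 using h2 h1 by (simp_all add: mult_pos_neg)
  have swapped_total: "(\<Sum>a\<in>UNIV. \<Sum>b\<in>UNIV. P (b, a)) = 1" using s1.P_total by simp
  obtain r2 where r2: "0 < r2" "r2 < 1" "d2.gallager_base r2 < 1"
    by (rule d2.gallager_base_below_one[OF s2.P_total s2.W_to2_total margin2])
  obtain r1 where r1: "0 < r1" "r1 < 1" "d1.gallager_base r1 < 1"
    by (rule d1.gallager_base_below_one[OF swapped_total s1.W_to2_total margin1])
  have "(\<lambda>n. d2.gallager_base r2 ^ n + d1.gallager_base r1 ^ n) \<longlonglongrightarrow> 0"
    using r2 r1 by (intro tendsto_add_zero LIMSEQ_power_zero) (auto simp: d2.gallager_base_nonneg d1.gallager_base_nonneg)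
  then have "eventually (\<lambda>n. d2.gallager_base r2 ^ n + d1.gallager_base r1 ^ n < \<epsilon>) sequentially"
    using \<open>\<epsilon> > 0\<close> by (rule order_tendstoD(2))
  then obtain N where N: "\<And>n. n \<ge> N \<Longrightarrow> d2.gallager_base r2 ^ n + d1.gallager_base r1 ^ n < \<epsilon>"
    unfolding eventually_sequentially by blast
  have "d2.ensemble_avg (Suc N) (code_error (Suc N)) < \<epsilon>"
    using ensemble_code_error_bound[OF r2(1,2) r1(1,2), of "Suc N"] N[of "Suc N"] by linarith
  then obtain c1 c2 where "code_error (Suc N) c1 c2 < \<epsilon>" by (rule d2.exists_below_ensemble_avg)
  then show "\<exists>n>0. \<exists>c1 c2. code_error n c1 c2 < \<epsilon>" by blast
qed

end

theorem corollary1: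
  fixes P :: "'s1::finite \<times> 's2::finite \<Rightarrow> real"
    and W :: "'x1::finite \<Rightarrow> 'x2::finite \<Rightarrow> ('y1::finite \<times> 'y2::finite) \<Rightarrow> real"
  assumes "is_pmf P"
    and "\<And>x1 x2. is_pmf (W x1 x2)"
    and "\<exists>(pQ :: 'q::finite \<Rightarrow> real) V1 V2.
           is_pmf pQ \<and> (\<forall>q s1. is_pmf (V1 q s1)) \<and> (\<forall>q s2. is_pmf (V2 q s2)) \<and>
           (let J = joint_dist pQ P V1 V2 W in
              cond_entropy J (\<lambda>(q,s1,s2,x1,x2,y1,y2). s1) (\<lambda>(q,s1,s2,x1,x2,y1,y2). s2)
                < cond_mutual_info J (\<lambda>(q,s1,s2,x1,x2,y1,y2). x1) (\<lambda>(q,s1,s2,x1,x2,y1,y2). y2)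
                    (\<lambda>(q,s1,s2,x1,x2,y1,y2). (x2, s2, q)) \<and>
              cond_entropy J (\<lambda>(q,s1,s2,x1,x2,y1,y2). s2) (\<lambda>(q,s1,s2,x1,x2,y1,y2). s1)
                < cond_mutual_info J (\<lambda>(q,s1,s2,x1,x2,y1,y2). x2) (\<lambda>(q,s1,s2,x1,x2,y1,y2). y1)
                    (\<lambda>(q,s1,s2,x1,x2,y1,y2). (x1, s1, q)))"
  shows "achievable_restricted P W 1"
proof -
  from assms(3) obtain pQ :: "'q \<Rightarrow> real" and V1 V2
    where laws: "is_pmf pQ" "\<forall>q s1. is_pmf (V1 q s1)" "\<forall>q s2. is_pmf (V2 q s2)"
      and margins: "let J = joint_dist pQ P V1 V2 W in
              cond_entropy J (\<lambda>(q,s1,s2,x1,x2,y1,y2). s1) (\<lambda>(q,s1,s2,x1,x2,y1,y2). s2)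
                < cond_mutual_info J (\<lambda>(q,s1,s2,x1,x2,y1,y2). x1) (\<lambda>(q,s1,s2,x1,x2,y1,y2). y2)
                    (\<lambda>(q,s1,s2,x1,x2,y1,y2). (x2, s2, q)) \<and>
              cond_entropy J (\<lambda>(q,s1,s2,x1,x2,y1,y2). s2) (\<lambda>(q,s1,s2,x1,x2,y1,y2). s1)
                < cond_mutual_info J (\<lambda>(q,s1,s2,x1,x2,y1,y2). x2) (\<lambda>(q,s1,s2,x1,x2,y1,y2). y1)
                    (\<lambda>(q,s1,s2,x1,x2,y1,y2). (x1, s1, q))"
    by blast
  interpret two_way_setup pQ P V1 V2 W
    by unfold_locales (use laws assms(1,2) in auto)
  show ?thesis
    by (rule achievable_from_margins) (use margins in \<open>simp_all add: s2.J_def Let_def\<close>)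
qed

end
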